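(* Let $k\ge1$, let $\Lambda$ be a row-finite $k$-graph with no sources and $R$ a commutative ring with $1$. The following are equivalent: (1) $\mathrm{KP}_R(\Lambda)$ is commutative; (2) $r(\lambda)=s(\lambda)$ for all $\lambda\in\Lambda$, and for every $n\in\mathbb{N}^k$ the restriction of $r$ to $\Lambda^n$ is injective; (3) $\Lambda$ is isomorphic (as a $k$-graph) to the disjoint union $\bigsqcup_{v\in\Lambda^0}\mathbb{N}^k$ of copies of $\mathbb{N}^k$, where $\mathbb{N}^k$ is viewed as a $k$-graph with one object and degree map the identity; (4) $\mathrm{KP}_R(\Lambda)\cong\bigoplus_{v\in\Lambda^0}R[x_1,x_1^{-1},\ldots,x_k,x_k^{-1}]$ (Laurent polynomials in $k$ commuting indeterminates).
   Context: $\mathbb{N}^k$ is regarded as a category with one object, composition being addition. A $k$-graph is a countable category $\Lambda$ with a functor $d:\Lambda\to\mathbb{N}^k$ with unique factorization: whenever $d(\lambda)=m+n$ there are unique $\mu,\nu$ with $d(\mu)=m$, $d(\nu)=n$, $\lambda=\mu\nu$. Vertices (objects) are identified with degree-$0$ morphisms; $\Lambda^0$ is the vertex set, $\Lambda^n=d^{-1}(n)$, $r,s$ are range and source, $\lambda\mu$ is defined when $s(\lambda)=r(\mu)$; $v\Lambda^n=\{\lambda\in\Lambda^n:r(\lambda)=v\}$. Row-finite: each $v\Lambda^n$ is finite; no sources: each $v\Lambda^n$ is nonempty. With $\Lambda^{\neq0}$ the paths of nonzero degree and formal symbols $\lambda^*$, a Kumjian-Pask $\Lambda$-family in an $R$-algebra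 $A$ is $P:\Lambda^0\to A$, $S:\Lambda^{\neq0}\cup\{\lambda^*\}\to A$ with: (KP1) the $P_v$ are mutually orthogonal idempotents; (KP2) for $r(\mu)=s(\lambda)$: $S_\lambda S_\mu=S_{\lambda\mu}$, $S_{\mu^*}S_{\lambda^*}=S_{(\lambda\mu)^*}$, $P_{r(\lambda)}S_\lambda=S_\lambda=S_\lambda P_{s(\lambda)}$, $P_{s(\lambda)}S_{\lambda^*}=S_{\lambda^*}=S_{\lambda^*}P_{r(\lambda)}$; (KP3) $S_{\lambda^*}S_\mu=\delta_{\lambda,\mu}P_{s(\lambda)}$ when $d(\lambda)=d(\mu)$; (KP4) $P_v=\sum_{\lambda\in v\Lambda^n}S_\lambda S_{\lambda^*}$ for $n\neq0$. $\mathrm{KP}_R(\Lambda)$ is the $R$-algebra generated by a universal Kumjian-Pask $\Lambda$-family $(p,s)$ (every Kumjian-Pask family in an $R$-algebra is the image of $(p,s)$ under a unique $R$-algebra homomorphism). *)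

theory Defs
  imports Main "HOL-Library.Countable_Set" "HOL-Library.Function_Algebras"
begin

text \<open>A k-graph with morphisms (paths) of type 'a; objects are identified with their
identity morphisms. N^k is rendered as the function type 'k => nat with 'k a finite
(hence nonempty) type, so k = CARD('k) >= 1. Addition and 0 on degrees are pointwise.\<close>

record ('a, 'k) kgraph =
  paths :: "'a set"
  rng   :: "'a \<Rightarrow> 'a"
  src   :: "'a \<Rightarrow> 'a"
  cmp   :: "'a \<Rightarrow> 'a \<Rightarrow> 'a"
  deg   :: "'a \<Rightarrow> 'k \<Rightarrow> nat"

definition vertices :: "('a, 'k) kgraph \<Rightarrow> 'a set" where
  "vertices G = {v \<in> paths G. deg G v = 0}"

definition is_kgraph :: "('a, 'k) kgraph \<Rightarrow> bool" where
  "is_kgraph G \<longleftrightarrow>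
     countable (paths G) \<and>
     (\<forall>x\<in>paths G. rng G x \<in> paths G \<and> src G x \<in> paths G \<and>
        rng G (rng G x) = rng G x \<and> src G (rng G x) = rng G x \<and>
        rng G (src G x) = src G x \<and> src G (src G x) = src G x \<and>
        deg G (rng G x) = 0 \<and> deg G (src G x) = 0 \<and>
        cmp G (rng G x) x = x \<and> cmp G x (src G x) = x) \<and>
     (\<forall>x\<in>paths G. \<forall>y\<in>paths G. src G x = rng G y \<longrightarrow>
        cmp G x y \<in> paths G \<and> rng G (cmp G x y) = rng G x \<and>
        src G (cmp G x y) = src G y \<and> deg G (cmp G x y) = deg G x + deg G y) \<and>
     (\<forall>x\<in>paths G. \<forall>y\<in>paths G. \<forall>z\<in>paths G.
        src G x = rng G y \<longrightarrow> src G y = rng G z \<longrightarrow>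
        cmp G (cmp G x y) z = cmp G x (cmp G y z)) \<and>
     (\<forall>x\<in>paths G. \<forall>m n. deg G x = m + n \<longrightarrow>
        (\<exists>!p. fst p \<in> paths G \<and> snd p \<in> paths G \<and> src G (fst p) = rng G (snd p) \<and>
              deg G (fst p) = m \<and> deg G (snd p) = n \<and> cmp G (fst p) (snd p) = x))"

definition row_finite :: "('a, 'k) kgraph \<Rightarrow> bool" where
  "row_finite G \<longleftrightarrow> (\<forall>v\<in>vertices G. \<forall>n. finite {x \<in> paths G. deg G x = n \<and> rng G x = v})"

definition no_sources :: "('a, 'k) kgraph \<Rightarrow> bool" where
  "no_sources G \<longleftrightarrow> (\<forall>v\<in>vertices G. \<forall>n. {x \<in> paths G. deg G x = n \<and> rng G x = v} \<noteq> {})"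

definition kg_iso :: "('a, 'k) kgraph \<Rightarrow> ('b, 'k) kgraph \<Rightarrow> bool" where
  "kg_iso G H \<longleftrightarrow> (\<exists>\<phi>. bij_betw \<phi> (paths G) (paths H) \<and>
     (\<forall>x\<in>paths G. deg H (\<phi> x) = deg G x \<and> rng H (\<phi> x) = \<phi> (rng G x) \<and>
                   src H (\<phi> x) = \<phi> (src G x)) \<and>
     (\<forall>x\<in>paths G. \<forall>y\<in>paths G. src G x = rng G y \<longrightarrow>
                   \<phi> (cmp G x y) = cmp H (\<phi> x) (\<phi> y)))"

definition disj_union_Nk :: "'v set \<Rightarrow> ('v \<times> ('k \<Rightarrow> nat), 'k) kgraph" where
  "disj_union_Nk V = \<lparr> paths = V \<times> UNIV,
      rng = (\<lambda>(v, n). (v, 0)), src = (\<lambda>(v, n). (v, 0)),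
      cmp = (\<lambda>(v, n) (w, m). (v, n + m)), deg = snd \<rparr>"

text \<open>KP_R(Lambda) is realised as the free (non-unital) R-algebra on the generators
p_v (v a vertex), s_x, s_x* (x of nonzero degree), modulo the two-sided ideal generated
by the relations (KP1)-(KP4). Elements of the free algebra are finitely supported
functions from nonempty words over the generators to R.\<close>

datatype 'a kpgen = GP 'a | GS 'a | GSs 'a

definition kp_gens :: "('a, 'k) kgraph \<Rightarrow> 'a kpgen set" where
  "kp_gens G = GP ` vertices G \<union> GS ` {x \<in> paths G. deg G x \<noteq> 0}
                \<union> GSs ` {x \<in> paths G. deg G x \<noteq> 0}"

definition fa_carrier :: "'r itself \<Rightarrow> ('a, 'k) kgraph \<Rightarrow> ('a kpgen list \<Rightarrow> 'r::comm_ring_1) set" where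
  "fa_carrier R G = {f. finite {w. f w \<noteq> 0} \<and> f [] = 0 \<and>
                        (\<forall>w. f w \<noteq> 0 \<longrightarrow> set w \<subseteq> kp_gens G)}"

definition fa_mult :: "('g list \<Rightarrow> 'r::comm_ring_1) \<Rightarrow> ('g list \<Rightarrow> 'r) \<Rightarrow> 'g list \<Rightarrow> 'r" where
  "fa_mult f g = (\<lambda>w. \<Sum>i\<le>length w. f (take i w) * g (drop i w))"

definition fa_gen :: "'g \<Rightarrow> 'g list \<Rightarrow> 'r::comm_ring_1" where
  "fa_gen x = (\<lambda>w. if w = [x] then 1 else 0)"

definition kp_rels :: "'r itself \<Rightarrow> ('a, 'k) kgraph \<Rightarrow> ('a kpgen list \<Rightarrow> 'r::comm_ring_1) set" where
  "kp_rels R G =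
    \<comment> \<open>KP1\<close>
    {fa_mult (fa_gen (GP v)) (fa_gen (GP w)) - (if v = w then fa_gen (GP v) else 0)
       | v w. v \<in> vertices G \<and> w \<in> vertices G}
    \<comment> \<open>KP2\<close>
  \<union> {fa_mult (fa_gen (GS x)) (fa_gen (GS y)) - fa_gen (GS (cmp G x y))
       | x y. x \<in> paths G \<and> y \<in> paths G \<and> deg G x \<noteq> 0 \<and> deg G y \<noteq> 0 \<and> src G x = rng G y}
  \<union> {fa_mult (fa_gen (GSs y)) (fa_gen (GSs x)) - fa_gen (GSs (cmp G x y))
       | x y. x \<in> paths G \<and> y \<in> paths G \<and> deg G x \<noteq> 0 \<and> deg G y \<noteq> 0 \<and> src G x = rng G y}
  \<union> {fa_mult (fa_gen (GP (rng G x))) (fa_gen (GS x)) - fa_gen (GS x)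
       | x. x \<in> paths G \<and> deg G x \<noteq> 0}
  \<union> {fa_mult (fa_gen (GS x)) (fa_gen (GP (src G x))) - fa_gen (GS x)
       | x. x \<in> paths G \<and> deg G x \<noteq> 0}
  \<union> {fa_mult (fa_gen (GP (src G x))) (fa_gen (GSs x)) - fa_gen (GSs x)
       | x. x \<in> paths G \<and> deg G x \<noteq> 0}
  \<union> {fa_mult (fa_gen (GSs x)) (fa_gen (GP (rng G x))) - fa_gen (GSs x)
       | x. x \<in> paths G \<and> deg G x \<noteq> 0}
    \<comment> \<open>KP3\<close>
  \<union> {fa_mult (fa_gen (GSs x)) (fa_gen (GS y)) - (if x = y then fa_gen (GP (src G x)) else 0)
       | x y. x \<in> paths G \<and> y \<in> paths G \<and> deg G x \<noteq> 0 \<and> deg G y \<noteq> 0 \<and> deg G x = deg G y}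
    \<comment> \<open>KP4\<close>
  \<union> {fa_gen (GP v) - (\<Sum>x\<in>{x \<in> paths G. deg G x = n \<and> rng G x = v}.
                          fa_mult (fa_gen (GS x)) (fa_gen (GSs x)))
       | v n. v \<in> vertices G \<and> n \<noteq> 0}"

inductive_set kp_ideal :: "'r itself \<Rightarrow> ('a, 'k) kgraph \<Rightarrow> ('a kpgen list \<Rightarrow> 'r::comm_ring_1) set"
  for R :: "'r itself" and G :: "('a, 'k) kgraph" where
  rel: "f \<in> kp_rels R G \<Longrightarrow> f \<in> kp_ideal R G"
| zero: "0 \<in> kp_ideal R G"
| add: "f \<in> kp_ideal R G \<Longrightarrow> g \<in> kp_ideal R G \<Longrightarrow> f + g \<in> kp_ideal R G"
| smult: "f \<in> kp_ideal R G \<Longrightarrow> (\<lambda>w. c * f w) \<in> kp_ideal R G"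
| lmult: "f \<in> kp_ideal R G \<Longrightarrow> h \<in> fa_carrier R G \<Longrightarrow> fa_mult h f \<in> kp_ideal R G"
| rmult: "f \<in> kp_ideal R G \<Longrightarrow> h \<in> fa_carrier R G \<Longrightarrow> fa_mult f h \<in> kp_ideal R G"

definition kp_commutative :: "'r::comm_ring_1 itself \<Rightarrow> ('a, 'k) kgraph \<Rightarrow> bool" where
  "kp_commutative R G \<longleftrightarrow>
     (\<forall>f\<in>fa_carrier R G. \<forall>g\<in>fa_carrier R G. fa_mult f g - fa_mult g f \<in> kp_ideal R G)"

text \<open>R[x_1^{+-1},...,x_k^{+-1}]: finitely supported functions ('k => int) => R;
the direct sum over the vertices: finitely supported functions on vertices x Z^k.\<close>
definition lsum_carrier :: "'r itself \<Rightarrow> ('a, 'k) kgraph \<Rightarrow> ('a \<Rightarrow> ('k \<Rightarrow> int) \<Rightarrow> 'r::comm_ring_1) set" where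
  "lsum_carrier R G = {F. finite {(v, m). F v m \<noteq> 0} \<and>
                          (\<forall>v m. F v m \<noteq> 0 \<longrightarrow> v \<in> vertices G)}"

definition lsum_mult :: "('a \<Rightarrow> ('k \<Rightarrow> int) \<Rightarrow> 'r::comm_ring_1) \<Rightarrow> ('a \<Rightarrow> ('k \<Rightarrow> int) \<Rightarrow> 'r) \<Rightarrow> 'a \<Rightarrow> ('k \<Rightarrow> int) \<Rightarrow> 'r" where
  "lsum_mult F H = (\<lambda>v m. \<Sum>m1\<in>{m1. F v m1 \<noteq> 0}. F v m1 * H v (m - m1))"

text \<open>KP_R(Lambda) is isomorphic as an R-algebra to the direct sum; by the first
isomorphism theorem this is the existence of a surjective R-algebra homomorphism from
the free algebra onto the direct sum whose kernel is exactly the KP ideal.\<close>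
definition kp_laurent_iso :: "'r::comm_ring_1 itself \<Rightarrow> ('a, 'k) kgraph \<Rightarrow> bool" where
  "kp_laurent_iso R G \<longleftrightarrow> (\<exists>\<phi>.
     \<phi> ` fa_carrier R G = lsum_carrier R G \<and>
     (\<forall>f\<in>fa_carrier R G. \<forall>g\<in>fa_carrier R G. \<phi> (f + g) = \<phi> f + \<phi> g) \<and>
     (\<forall>c. \<forall>f\<in>fa_carrier R G. \<phi> (\<lambda>w. c * f w) = (\<lambda>v m. c * \<phi> f v m)) \<and>
     (\<forall>f\<in>fa_carrier R G. \<forall>g\<in>fa_carrier R G. \<phi> (fa_mult f g) = lsum_mult (\<phi> f) (\<phi> g)) \<and>
     (\<forall>f\<in>fa_carrier R G. \<phi> f = 0 \<longleftrightarrow> f \<in> kp_ideal R G))"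

end

theory Submission
  imports Defs
begin

text \<open>If \<open>KP\<^sub>R(\<Lambda>)\<close> is commutative, look at its representation on functions on infinite paths,
  in which \<open>s\<^sub>\<lambda>\<close> deletes an initial segment \<open>\<lambda>\<close> and \<open>s\<^sub>\<lambda>\<^sup>*\<close> prepends it. Along an infinite path
  through \<open>\<lambda>\<close> the word \<open>p\<^bsub>r(\<lambda>)\<^esub> s\<^sub>\<lambda>\<close> acts but \<open>s\<^sub>\<lambda> p\<^bsub>r(\<lambda>)\<^esub>\<close> does not unless \<open>r(\<lambda>) = s(\<lambda>)\<close>;
  likewise \<open>s\<^sub>\<mu> s\<^sub>\<lambda>\<^sup>*\<close> acts but \<open>s\<^sub>\<lambda>\<^sup>* s\<^sub>\<mu>\<close> does not when \<open>\<lambda> \<noteq> \<mu>\<close> have the same degree and range.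
  This gives (2), and under (2) the map \<open>\<lambda> \<mapsto> (r(\<lambda>), d(\<lambda>))\<close> is an isomorphism onto
  \<open>\<Union>\<^sub>v \<nat>\<^sup>k\<close>.

  Conversely, under (2) the path \<open>\<lambda>(v,n)\<close> at \<open>v\<close> of degree \<open>n\<close> is unique, and the Kumjian-Pask
  relations rewrite every word in the generators either to \<open>0\<close> or to a normal form
  \<open>s\<^bsub>\<lambda>(v,a)\<^esub> s\<^bsub>\<lambda>(v,b)\<^esub>\<^sup>*\<close> depending only on \<open>v\<close> and \<open>a - b \<in> \<int>\<^sup>k\<close>. Sending a word to the monomial
  \<open>x\<^bsup>a - b\<^esup>\<close> of its normal form in the summand of \<open>v\<close> kills the relations, is multiplicative, and
  is injective on normal forms, so it induces \<open>KP\<^sub>R(\<Lambda>) \<cong> \<Oplus>\<^sub>v R[x\<^sub>1\<^sup>\<plusminus>\<^sup>1, \<dots>, x\<^sub>k\<^sup>\<plusminus>\<^sup>1]\<close>,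
  which is commutative.\<close>

lemma le_add_fun: "(m :: 'k \<Rightarrow> nat) \<le> m + n"
  by (simp add: le_fun_def)

lemma le_add_diff_inverse_fun: "(m :: 'k \<Rightarrow> nat) \<le> n \<Longrightarrow> m + (n - m) = n"
  by (simp add: fun_eq_iff le_fun_def)

lemma add_le_imp_le_left_fun: "(p :: 'k \<Rightarrow> nat) + q \<le> a \<Longrightarrow> p \<le> a"
  using le_add_fun order_trans by blast

lemma add_le_imp_le_diff_fun: "(p :: 'k \<Rightarrow> nat) + q \<le> a \<Longrightarrow> q \<le> a - p"
  by (auto simp: le_fun_def) (metis add_le_imp_le_diff add.commute)

lemma add_eq_0_iff_fun: "(a + b :: 'k \<Rightarrow> nat) = 0 \<longleftrightarrow> a = 0 \<and> b = 0"
  by (auto simp: fun_eq_iff)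

locale k_graph =
  fixes G :: "('a, 'k) kgraph"
  assumes is_kgraph: "is_kgraph G"
begin

abbreviation "P \<equiv> paths G"
abbreviation "r \<equiv> rng G"
abbreviation "s \<equiv> src G"
abbreviation "c \<equiv> cmp G"
abbreviation "d \<equiv> deg G"

lemma rng_in: "x \<in> P \<Longrightarrow> r x \<in> P" and src_in: "x \<in> P \<Longrightarrow> s x \<in> P"
  and rng_rng: "x \<in> P \<Longrightarrow> r (r x) = r x" and src_rng: "x \<in> P \<Longrightarrow> s (r x) = r x"
  and rng_src: "x \<in> P \<Longrightarrow> r (s x) = s x"
  and deg_rng: "x \<in> P \<Longrightarrow> d (r x) = 0" and deg_src: "x \<in> P \<Longrightarrow> d (s x) = 0"
  and cmp_rng: "x \<in> P \<Longrightarrow> c (r x) x = x" and cmp_src: "x \<in> P \<Longrightarrow> c x (s x) = x"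
  using is_kgraph unfolding is_kgraph_def by auto

lemma cmp_in: "x \<in> P \<Longrightarrow> y \<in> P \<Longrightarrow> s x = r y \<Longrightarrow> c x y \<in> P"
  and rng_cmp: "x \<in> P \<Longrightarrow> y \<in> P \<Longrightarrow> s x = r y \<Longrightarrow> r (c x y) = r x"
  and src_cmp: "x \<in> P \<Longrightarrow> y \<in> P \<Longrightarrow> s x = r y \<Longrightarrow> s (c x y) = s y"
  and deg_cmp: "x \<in> P \<Longrightarrow> y \<in> P \<Longrightarrow> s x = r y \<Longrightarrow> d (c x y) = d x + d y"
  using is_kgraph unfolding is_kgraph_def by auto

lemma cmp_assoc: "x \<in> P \<Longrightarrow> y \<in> P \<Longrightarrow> z \<in> P \<Longrightarrow> s x = r y \<Longrightarrow> s y = r z \<Longrightarrow>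
   c (c x y) z = c x (c y z)"
  using is_kgraph unfolding is_kgraph_def by blast

lemma unique_factorisation: "x \<in> P \<Longrightarrow> d x = m + n \<Longrightarrow>
  (\<exists>!p. fst p \<in> P \<and> snd p \<in> P \<and> s (fst p) = r (snd p) \<and>
              d (fst p) = m \<and> d (snd p) = n \<and> c (fst p) (snd p) = x)"
  using is_kgraph unfolding is_kgraph_def by blast

lemma rng_in_vertices: "x \<in> P \<Longrightarrow> r x \<in> vertices G"
  and src_in_vertices: "x \<in> P \<Longrightarrow> s x \<in> vertices G"
  using rng_in src_in deg_rng deg_src unfolding vertices_def by auto

text \<open>\<open>pre x m\<close> and \<open>suf x m\<close> are the segments \<open>x(0, m)\<close> and \<open>x(m, d x)\<close> of the paper.\<close>

definition factor :: "'a \<Rightarrow> ('k \<Rightarrow> nat) \<Rightarrow> 'a \<times> 'a" where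
  "factor x m = (THE p. fst p \<in> P \<and> snd p \<in> P \<and> s (fst p) = r (snd p) \<and>
              d (fst p) = m \<and> d (snd p) = d x - m \<and> c (fst p) (snd p) = x)"

definition "pre x m = fst (factor x m)"
definition "suf x m = snd (factor x m)"

lemma pre_suf:
  assumes "x \<in> P" "m \<le> d x"
  shows "pre x m \<in> P" "suf x m \<in> P" "s (pre x m) = r (suf x m)" "d (pre x m) = m"
    "d (suf x m) = d x - m" "c (pre x m) (suf x m) = x"
proof -
  have "d x = m + (d x - m)" using assms(2) by (simp add: le_add_diff_inverse_fun)
  from theI'[OF unique_factorisation[OF assms(1) this]]
  show "pre x m \<in> P" "suf x m \<in> P" "s (pre x m) = r (suf x m)" "d (pre x m) = m"
    "d (suf x m) = d x - m" "c (pre x m) (suf x m) = x"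
    unfolding pre_def suf_def factor_def by auto
qed

lemma pre_suf_cmp:
  assumes "a \<in> P" "b \<in> P" "s a = r b"
  shows "pre (c a b) (d a) = a" "suf (c a b) (d a) = b"
proof -
  have ab: "c a b \<in> P" and dab: "d (c a b) = d a + d b" using assms cmp_in deg_cmp by auto
  then have "\<exists>!p. fst p \<in> P \<and> snd p \<in> P \<and> s (fst p) = r (snd p) \<and>
              d (fst p) = d a \<and> d (snd p) = d (c a b) - d a \<and> c (fst p) (snd p) = c a b"
    using unique_factorisation[OF ab dab] by simp
  then have "factor (c a b) (d a) = (a, b)"
    unfolding factor_def by (rule the1_equality) (use assms dab in auto)
  then show "pre (c a b) (d a) = a" "suf (c a b) (d a) = b" unfolding pre_def suf_def by auto
qed

lemma pre_suf_eqI: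
  assumes "a \<in> P" "b \<in> P" "s a = r b" "c a b = x"
  shows "pre x (d a) = a" "suf x (d a) = b"
  using pre_suf_cmp assms by auto

lemma rng_deg_0: assumes "x \<in> P" "d x = 0" shows "r x = x"
proof -
  have "pre (c (r x) x) (d (r x)) = r x" using pre_suf_cmp[of "r x" x] assms rng_in src_rng by auto
  moreover have "pre (c x (s x)) (d x) = x" using pre_suf_cmp[of x "s x"] assms src_in rng_src by auto
  ultimately show ?thesis using assms cmp_rng cmp_src deg_rng by simp
qed

lemma src_deg_0: assumes "x \<in> P" "d x = 0" shows "s x = x"
  using rng_deg_0[OF assms] assms src_rng by metis

lemma pre_0: "a \<in> P \<Longrightarrow> pre a 0 = r a"
  using pre_suf_eqI(1)[of "r a" a a] rng_in src_rng cmp_rng deg_rng by auto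

lemma pre_deg: "a \<in> P \<Longrightarrow> pre a (d a) = a"
  using pre_suf_eqI(1)[of a "s a" a] src_in rng_src cmp_src by auto

lemma suf_deg: "a \<in> P \<Longrightarrow> suf a (d a) = s a"
  using pre_suf_eqI(2)[of a "s a" a] src_in rng_src cmp_src by auto

lemma rng_pre: "a \<in> P \<Longrightarrow> m \<le> d a \<Longrightarrow> r (pre a m) = r a"
  using pre_suf[of a m] rng_cmp by metis

lemma src_suf: "a \<in> P \<Longrightarrow> m \<le> d a \<Longrightarrow> s (suf a m) = s a"
  using pre_suf[of a m] src_cmp by metis

lemma pre_suf_cmp_left:
  assumes "a \<in> P" "b \<in> P" "s a = r b" "m \<le> d a"
  shows "pre (c a b) m = pre a m" "suf (c a b) m = c (suf a m) b"
proof -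
  note sp = pre_suf[OF assms(1,4)]
  have sb: "s (suf a m) = r b" using src_suf[OF assms(1,4)] assms(3) by simp
  have "c a b = c (c (pre a m) (suf a m)) b" using sp(6) by simp
  also have "\<dots> = c (pre a m) (c (suf a m) b)"
    by (rule cmp_assoc) (use sp assms(2) sb in auto)
  finally have e: "c (pre a m) (c (suf a m) b) = c a b" ..
  have "c (suf a m) b \<in> P" using cmp_in[OF sp(2) assms(2) sb] .
  moreover have "s (pre a m) = r (c (suf a m) b)" using sp(3) rng_cmp[OF sp(2) assms(2) sb] by simp
  ultimately show "pre (c a b) m = pre a m" "suf (c a b) m = c (suf a m) b"
    using pre_suf_eqI[OF sp(1) _ _ e] sp(4) by simp_all
qed

lemma pre_suf_cmp_right:
  assumes "a \<in> P" "b \<in> P" "s a = r b" "m \<le> d b"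
  shows "pre (c a b) (d a + m) = c a (pre b m)" "suf (c a b) (d a + m) = suf b m"
proof -
  note sp = pre_suf[OF assms(2,4)]
  have ab: "s a = r (pre b m)" using rng_pre[OF assms(2,4)] assms(3) by simp
  have "c a b = c a (c (pre b m) (suf b m))" using sp(6) by simp
  also have "\<dots> = c (c a (pre b m)) (suf b m)"
    by (rule cmp_assoc[symmetric]) (use sp assms(1) ab in auto)
  finally have e: "c (c a (pre b m)) (suf b m) = c a b" ..
  have "c a (pre b m) \<in> P" using cmp_in[OF assms(1) sp(1) ab] .
  moreover have "s (c a (pre b m)) = r (suf b m)" using sp(3) src_cmp[OF assms(1) sp(1) ab] by simp
  ultimately have "pre (c a b) (d (c a (pre b m))) = c a (pre b m)"
    "suf (c a b) (d (c a (pre b m))) = suf b m"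
    using pre_suf_eqI[OF _ sp(2) _ e] by simp_all
  moreover have "d (c a (pre b m)) = d a + m" using sp(4) deg_cmp[OF assms(1) sp(1) ab] by simp
  ultimately show "pre (c a b) (d a + m) = c a (pre b m)" "suf (c a b) (d a + m) = suf b m"
    by simp_all
qed

lemma pre_pre:
  assumes "a \<in> P" "m \<le> n" "n \<le> d a"
  shows "pre (pre a n) m = pre a m"
  using pre_suf_cmp_left(1)[of "pre a n" "suf a n" m] pre_suf[OF assms(1,3)] assms(2) by simp

lemma suf_suf:
  assumes "a \<in> P" "p + q \<le> d a"
  shows "suf (suf a p) q = suf a (p + q)"
proof -
  note sp = pre_suf[OF assms(1) add_le_imp_le_left_fun[OF assms(2)]]
  have "q \<le> d (suf a p)" using sp(5) assms(2) add_le_imp_le_diff_fun by simp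
  then have "suf (c (pre a p) (suf a p)) (d (pre a p) + q) = suf (suf a p) q"
    using pre_suf_cmp_right(2) sp by blast
  then show ?thesis using sp by simp
qed

lemma pre_suf_commute:
  assumes "a \<in> P" "p + m \<le> d a"
  shows "pre (suf a p) m = suf (pre a (p + m)) p"
proof -
  note sp = pre_suf[OF assms(1) add_le_imp_le_left_fun[OF assms(2)]]
  have m: "m \<le> d (suf a p)" using sp(5) assms(2) add_le_imp_le_diff_fun by simp
  have "pre (c (pre a p) (suf a p)) (d (pre a p) + m) = c (pre a p) (pre (suf a p) m)"
    by (rule pre_suf_cmp_right(1)) (use sp m in auto)
  then have "c (pre a p) (pre (suf a p) m) = pre a (p + m)" using sp by simp
  moreover have "s (pre a p) = r (pre (suf a p) m)" using sp(3) rng_pre[OF sp(2) m] by simp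
  ultimately show ?thesis
    using pre_suf_eqI(2)[OF sp(1) pre_suf(1)[OF sp(2) m]] sp(4) by simp
qed

end

section \<open>Infinite paths\<close>

text \<open>An infinite path is encoded by the family of its initial segments \<open>x n\<close> of every degree
  \<open>n\<close>; shifting by \<open>p\<close> drops the segment of degree \<open>p\<close>, and \<open>prepend l x\<close> is the path \<open>l x\<close>.\<close>

context k_graph
begin

definition inf_paths :: "(('k \<Rightarrow> nat) \<Rightarrow> 'a) set" where
  "inf_paths = {x. (\<forall>n. x n \<in> P \<and> d (x n) = n) \<and> (\<forall>m n. m \<le> n \<longrightarrow> pre (x n) m = x m)}"

definition shift :: "('k \<Rightarrow> nat) \<Rightarrow> (('k \<Rightarrow> nat) \<Rightarrow> 'a) \<Rightarrow> ('k \<Rightarrow> nat) \<Rightarrow> 'a" where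
  "shift p x = (\<lambda>n. suf (x (p + n)) p)"

definition prepend :: "'a \<Rightarrow> (('k \<Rightarrow> nat) \<Rightarrow> 'a) \<Rightarrow> ('k \<Rightarrow> nat) \<Rightarrow> 'a" where
  "prepend l x = (\<lambda>n. pre (c l (x n)) n)"

lemma inf_pathsD:
  assumes "x \<in> inf_paths"
  shows "x n \<in> P" "d (x n) = n" "m \<le> n \<Longrightarrow> pre (x n) m = x m"
  using assms unfolding inf_paths_def by auto

lemma rng_inf_path: assumes "x \<in> inf_paths" shows "r (x n) = x 0"
  using inf_pathsD(3)[OF assms, of 0 n] pre_0[OF inf_pathsD(1)[OF assms]] by simp

lemma inf_path_decomp:
  assumes "x \<in> inf_paths"
  shows "x (p + n) = c (x p) (shift p x n)" and "s (x p) = r (shift p x n)"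
    and "shift p x n \<in> P"
proof -
  have le: "p \<le> d (x (p + n))" using inf_pathsD(2)[OF assms] le_add_fun by simp
  have "pre (x (p + n)) p = x p" using inf_pathsD(3)[OF assms] le_add_fun by blast
  then show "x (p + n) = c (x p) (shift p x n)" "s (x p) = r (shift p x n)"
    "shift p x n \<in> P"
    using pre_suf[OF inf_pathsD(1)[OF assms] le] unfolding shift_def by auto
qed

lemma shift_in_inf_paths: assumes "x \<in> inf_paths" shows "shift p x \<in> inf_paths"
proof -
  have le: "\<And>n. p \<le> d (x (p + n))" using inf_pathsD(2)[OF assms] le_add_fun by simp
  have "\<forall>n. shift p x n \<in> P \<and> d (shift p x n) = n"
    using pre_suf(2,5)[OF inf_pathsD(1)[OF assms] le] inf_pathsD(2)[OF assms]
    unfolding shift_def by simp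
  moreover have "pre (shift p x n) m = shift p x m" if "m \<le> n" for m n
  proof -
    have pm: "p + m \<le> d (x (p + n))" using inf_pathsD(2)[OF assms] that by (simp add: add_left_mono)
    have "pre (shift p x n) m = suf (pre (x (p + n)) (p + m)) p"
      unfolding shift_def by (rule pre_suf_commute[OF inf_pathsD(1)[OF assms] pm])
    also have "\<dots> = shift p x m" unfolding shift_def
      using inf_pathsD(3)[OF assms, of "p + m" "p + n"] that by (simp add: add_left_mono)
    finally show ?thesis .
  qed
  ultimately show ?thesis unfolding inf_paths_def by auto
qed

lemma shift_0: assumes "x \<in> inf_paths" shows "shift p x 0 = s (x p)"
  unfolding shift_def using suf_deg[OF inf_pathsD(1)[OF assms]] inf_pathsD(2)[OF assms] by simp

lemma shift_shift: assumes "x \<in> inf_paths" shows "shift q (shift p x) = shift (p + q) x"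
proof
  fix n
  have "p + q \<le> d (x (p + (q + n)))" using inf_pathsD(2)[OF assms] le_add_fun[of "p + q" n]
    by (simp add: add.assoc)
  then show "shift q (shift p x) n = shift (p + q) x n"
    unfolding shift_def using suf_suf[OF inf_pathsD(1)[OF assms]] by (simp add: add.assoc)
qed

context
  fixes x l
  assumes x: "x \<in> inf_paths" and l: "l \<in> P" "s l = x 0"
begin

lemma src_eq_rng_inf_path: "s l = r (x n)"
  using rng_inf_path[OF x] l(2) by simp

lemma prepend_decomp:
  "c l (x n) \<in> P" "d (c l (x n)) = d l + n" "n \<le> d (c l (x n))"
proof -
  show "c l (x n) \<in> P" using cmp_in[OF l(1) inf_pathsD(1)[OF x] src_eq_rng_inf_path] .
  show dn: "d (c l (x n)) = d l + n"
    using deg_cmp[OF l(1) inf_pathsD(1)[OF x] src_eq_rng_inf_path] inf_pathsD(2)[OF x] by simp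
  show "n \<le> d (c l (x n))" unfolding dn using le_add_fun[of n "d l"] by (simp add: add.commute)
qed

lemma cmp_prepend_split:
  assumes "m \<le> n"
  shows "c l (x n) = c (c l (x m)) (shift m x (n - m))"
proof -
  have "x n = c (x m) (shift m x (n - m))"
    using inf_path_decomp(1)[OF x, of m "n - m"] le_add_diff_inverse_fun[OF assms] by simp
  then show ?thesis
    using cmp_assoc[OF l(1) inf_pathsD(1)[OF x] inf_path_decomp(3)[OF x] src_eq_rng_inf_path
        inf_path_decomp(2)[OF x]] by simp
qed

lemma prepend_in_inf_paths: "prepend l x \<in> inf_paths"
proof -
  have "\<forall>n. prepend l x n \<in> P \<and> d (prepend l x n) = n"
    using pre_suf(1,4)[OF prepend_decomp(1,3)] unfolding prepend_def by simp
  moreover have "pre (prepend l x n) m = prepend l x m" if "m \<le> n" for m n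
  proof -
    have "pre (prepend l x n) m = pre (c l (x n)) m" unfolding prepend_def
      by (rule pre_pre[OF prepend_decomp(1) that prepend_decomp(3)])
    also have "\<dots> = pre (c l (x m)) m"
      unfolding cmp_prepend_split[OF that]
      by (rule pre_suf_cmp_left(1)[OF prepend_decomp(1) inf_path_decomp(3)[OF x] _
            prepend_decomp(3)])
        (use src_cmp[OF l(1) inf_pathsD(1)[OF x] src_eq_rng_inf_path] inf_path_decomp(2)[OF x]
          in simp)
    finally show ?thesis unfolding prepend_def .
  qed
  ultimately show ?thesis unfolding inf_paths_def by auto
qed

lemma prepend_0: "prepend l x 0 = r l"
  unfolding prepend_def
  using pre_0[OF prepend_decomp(1)] rng_cmp[OF l(1) inf_pathsD(1)[OF x] src_eq_rng_inf_path]
  by simp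

lemma prepend_deg: "prepend l x (d l) = l"
  unfolding prepend_def using pre_suf_cmp(1)[OF l(1) inf_pathsD(1)[OF x] src_eq_rng_inf_path] .

lemma shift_prepend: "shift (d l) (prepend l x) = x"
proof
  fix n
  have "c l (x (d l + n)) = c (c l (x n)) (shift n x (d l))"
    using cmp_prepend_split[of n "d l + n"] by (simp add: le_add_fun add.commute)
  then have "pre (c l (x (d l + n))) (d l + n) = c l (x n)"
    using pre_suf_cmp(1)[OF prepend_decomp(1) inf_path_decomp(3)[OF x]] prepend_decomp(2)
      src_cmp[OF l(1) inf_pathsD(1)[OF x] src_eq_rng_inf_path] inf_path_decomp(2)[OF x]
    by simp
  then show "shift (d l) (prepend l x) n = x n"
    unfolding shift_def prepend_def
    using pre_suf_cmp(2)[OF l(1) inf_pathsD(1)[OF x] src_eq_rng_inf_path] by simp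
qed

end

lemma prepend_shift:
  assumes "x \<in> inf_paths" "x (d l) = l"
  shows "prepend l (shift (d l) x) = x"
proof
  fix n
  have "prepend l (shift (d l) x) n = pre (x (d l + n)) n"
    unfolding prepend_def using inf_path_decomp(1)[OF assms(1), of "d l" n] assms(2) by simp
  also have "\<dots> = x n"
    using inf_pathsD(3)[OF assms(1)] le_add_fun[of n "d l"] by (simp add: add.commute)
  finally show "prepend l (shift (d l) x) n = x n" .
qed

lemma inf_path_cmp_iff:
  assumes "x \<in> inf_paths" "l \<in> P" "m \<in> P" "s l = r m"
  shows "x (d l + d m) = c l m \<longleftrightarrow> x (d l) = l \<and> shift (d l) x (d m) = m"
proof
  assume h: "x (d l + d m) = c l m"
  have "x (d l) = pre (x (d l + d m)) (d l)" using inf_pathsD(3)[OF assms(1)] le_add_fun by metis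
  then show "x (d l) = l \<and> shift (d l) x (d m) = m"
    using h pre_suf_cmp[OF assms(2-4)] unfolding shift_def by simp
next
  assume "x (d l) = l \<and> shift (d l) x (d m) = m"
  then show "x (d l + d m) = c l m" using inf_path_decomp(1)[OF assms(1)] by simp
qed

lemma prepend_prepend:
  assumes "x \<in> inf_paths" "l \<in> P" "m \<in> P" "s l = r m" "s m = x 0"
  shows "prepend l (prepend m x) = prepend (c l m) x"
proof -
  have y: "prepend m x \<in> inf_paths" using prepend_in_inf_paths[OF assms(1,3,5)] .
  have y0: "s l = prepend m x 0" using prepend_0[OF assms(1,3,5)] assms(4) by simp
  define z where "z = prepend l (prepend m x)"
  have z: "z \<in> inf_paths" unfolding z_def using prepend_in_inf_paths[OF y assms(2) y0] .
  have sz: "shift (d l) z = prepend m x" unfolding z_def using shift_prepend[OF y assms(2) y0] .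
  have "z (d l + d m) = c l m"
    using inf_path_cmp_iff[OF z assms(2-4)] prepend_deg[OF y assms(2) y0] sz
      prepend_deg[OF assms(1,3,5)]
    unfolding z_def by simp
  moreover have "shift (d (c l m)) z = x"
    unfolding deg_cmp[OF assms(2-4)] shift_shift[OF z, symmetric] sz
    using shift_prepend[OF assms(1,3,5)] .
  ultimately show ?thesis
    using prepend_shift[OF z, of "c l m"] deg_cmp[OF assms(2-4)] z_def by simp
qed

text \<open>Without sources one can walk from \<open>v\<close> along the diagonal \<open>(1, \<dots>, 1)\<close> forever;
  since \<open>'k\<close> is finite, every degree lies below some diagonal degree.\<close>

lemma diagonal_path_exists:
  assumes ns: "no_sources G" and v: "v \<in> vertices G"
  shows "\<exists>y. \<forall>j. y j \<in> P \<and> d (y j) = (\<lambda>_. j) \<and> r (y j) = v \<and>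
                  (\<forall>i\<le>j. pre (y j) (\<lambda>_. i) = y i)"
proof -
  define nxt where "nxt w = (SOME e. e \<in> P \<and> d e = (\<lambda>_. 1) \<and> r e = w)" for w
  have nxt: "nxt w \<in> P \<and> d (nxt w) = (\<lambda>_. 1) \<and> r (nxt w) = w" if "w \<in> vertices G" for w
  proof -
    have "{x \<in> P. d x = (\<lambda>_. 1) \<and> r x = w} \<noteq> {}" using ns that unfolding no_sources_def by blast
    then have "\<exists>e. e \<in> P \<and> d e = (\<lambda>_. 1) \<and> r e = w" by blast
    then show ?thesis unfolding nxt_def by (rule someI_ex)
  qed
  define y where "y = rec_nat v (\<lambda>j yj. c yj (nxt (s yj)))"
  have y0: "y 0 = v" and y_Suc: "y (Suc j) = c (y j) (nxt (s (y j)))" for j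
    unfolding y_def by auto
  have step: "s (y j) = r (nxt (s (y j)))" "nxt (s (y j)) \<in> P" "d (nxt (s (y j))) = (\<lambda>_. 1)"
    if "y j \<in> P" for j
    using nxt[OF src_in_vertices[OF that]] by auto
  have yp: "y j \<in> P \<and> d (y j) = (\<lambda>_. j) \<and> r (y j) = v" for j
  proof (induction j)
    case 0 then show ?case using y0 v rng_deg_0 by (auto simp: vertices_def fun_eq_iff)
  next
    case (Suc j)
    then have yj: "y j \<in> P" by simp
    show ?case unfolding y_Suc
      using cmp_in[OF yj step(2)[OF yj] step(1)[OF yj]] deg_cmp[OF yj step(2)[OF yj] step(1)[OF yj]]
        rng_cmp[OF yj step(2)[OF yj] step(1)[OF yj]] step(3)[OF yj] Suc
      by (simp add: fun_eq_iff)
  qed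
  have "pre (y j) (\<lambda>_. i) = y i" if "i \<le> j" for i j
    using that
  proof (induction j)
    case 0 then show ?case using pre_deg[of "y 0"] yp[of 0] by simp
  next
    case (Suc j)
    show ?case
    proof (cases "i = Suc j")
      case True then show ?thesis using pre_deg yp by metis
    next
      case False
      with Suc.prems have ij: "i \<le> j" by simp
      have yj: "y j \<in> P" and le: "(\<lambda>_. i) \<le> d (y j)" using yp[of j] ij by (auto simp: le_fun_def)
      show ?thesis unfolding y_Suc
        using pre_suf_cmp_left(1)[OF yj step(2)[OF yj] step(1)[OF yj] le] Suc.IH[OF ij] by simp
    qed
  qed
  then show ?thesis using yp by blast
qed

lemma inf_path_exists:
  assumes "finite (UNIV :: 'k set)" and "no_sources G" and "v \<in> vertices G"
  shows "\<exists>x\<in>inf_paths. x 0 = v"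
proof -
  obtain y where y: "\<And>j. y j \<in> P \<and> d (y j) = (\<lambda>_. j) \<and> r (y j) = v"
    and y_pre: "\<And>i j. i \<le> j \<Longrightarrow> pre (y j) (\<lambda>_. i) = y i"
    using diagonal_path_exists[OF assms(2,3)] by blast
  define N :: "('k \<Rightarrow> nat) \<Rightarrow> nat" where "N n = Max (range n)" for n
  have le_N: "n \<le> (\<lambda>_. N n)" for n
    unfolding N_def le_fun_def using assms(1) by auto
  have N_mono: "N m \<le> N n" if "m \<le> n" for m n
  proof -
    have "\<forall>i. m i \<le> N n" using that le_N[of n] by (auto simp: le_fun_def intro: order_trans)
    then show ?thesis unfolding N_def[of m] using assms(1) by (auto intro: Max.boundedI)
  qed
  define x where "x n = pre (y (N n)) n" for n
  have "x n \<in> P \<and> d (x n) = n" for n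
    unfolding x_def using pre_suf(1,4)[of "y (N n)" n] y le_N by auto
  moreover have "pre (x n) m = x m" if "m \<le> n" for m n
  proof -
    have "pre (x n) m = pre (y (N n)) m"
      unfolding x_def using pre_pre[of "y (N n)" m n] y le_N that by auto
    also have "\<dots> = pre (pre (y (N n)) (\<lambda>_. N m)) m"
      using pre_pre[of "y (N n)" m "\<lambda>_. N m"] y le_N N_mono[OF that] by (auto simp: le_fun_def)
    also have "\<dots> = x m" unfolding x_def using y_pre[OF N_mono[OF that]] by simp
    finally show ?thesis .
  qed
  ultimately have "x \<in> inf_paths" unfolding inf_paths_def by auto
  moreover have "x 0 = v" unfolding x_def using pre_0 y by auto
  ultimately show ?thesis by blast
qed

end

definition fa_word :: "'g list \<Rightarrow> 'g list \<Rightarrow> 'r::comm_ring_1" where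
  "fa_word u = (\<lambda>w. if w = u then 1 else 0)"

definition lin_ext :: "('w \<Rightarrow> 'i \<Rightarrow> 'r) \<Rightarrow> ('w \<Rightarrow> 'r) \<Rightarrow> 'i \<Rightarrow> 'r::comm_ring_1" where
  "lin_ext K f i = (\<Sum>w\<in>{w. f w \<noteq> 0}. f w * K w i)"

lemma sum_fun_apply: "(\<Sum>l\<in>L. F l) w = (\<Sum>l\<in>L. F l w :: 'r::comm_monoid_add)"
  by (induction L rule: infinite_finite_induct) auto

lemma finite_support_sum:
  assumes "finite L" "\<forall>l\<in>L. finite {w. F l w \<noteq> 0}"
  shows "finite {w. (\<Sum>l\<in>L. F l) w \<noteq> (0::'r::comm_monoid_add)}"
proof -
  have "{w. (\<Sum>l\<in>L. F l) w \<noteq> 0} \<subseteq> (\<Union>l\<in>L. {w. F l w \<noteq> 0})"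
    by (auto simp: sum_fun_apply intro: sum.not_neutral_contains_not_neutral)
  then show ?thesis using assms by (auto intro: finite_subset)
qed

lemma finite_support_fa_word: "finite {w. (fa_word u :: _ \<Rightarrow> 'r::comm_ring_1) w \<noteq> 0}"
  by (rule finite_subset[of _ "{u}"]) (auto simp: fa_word_def)

lemma fa_gen_eq_fa_word: "fa_gen g = fa_word [g]"
  unfolding fa_gen_def fa_word_def ..

lemma fa_mult_fa_word: "fa_mult (fa_word u) (fa_word v) = (fa_word (u @ v) :: _ \<Rightarrow> 'r::comm_ring_1)"
proof
  fix w
  have "(take i w = u \<and> drop i w = v) \<longleftrightarrow> (i = length u \<and> w = u @ v)" if "i \<le> length w" for i
    using that by (auto simp: min_def)
  then have "fa_mult (fa_word u) (fa_word v) w =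
      (\<Sum>i\<le>length w. if i = length u \<and> w = u @ v then 1 else 0 :: 'r)"
    unfolding fa_mult_def fa_word_def by (intro sum.cong) auto
  also have "\<dots> = fa_word (u @ v) w"
    by (cases "w = u @ v") (auto simp: fa_word_def)
  finally show "fa_mult (fa_word u) (fa_word v) w = (fa_word (u @ v) w :: 'r)" .
qed

lemma fa_mult_fa_word_single: "fa_mult (fa_word [a]) (fa_word [b]) = (fa_word [a, b] :: _ \<Rightarrow> 'r::comm_ring_1)"
  using fa_mult_fa_word[of "[a]" "[b]"] by simp

lemma fa_mult_diff_left: "fa_mult (f - g) h = fa_mult f h - fa_mult g h"
  by (simp add: fa_mult_def fun_eq_iff sum_subtractf left_diff_distrib)

lemma fa_mult_diff_right: "fa_mult h (f - g) = fa_mult h f - fa_mult h g"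
  by (simp add: fa_mult_def fun_eq_iff sum_subtractf right_diff_distrib)

lemma fa_mult_sum_left: "fa_mult (\<Sum>l\<in>L. F l) g = (\<Sum>l\<in>L. fa_mult (F l) g)"
  by (simp add: fa_mult_def fun_eq_iff sum_fun_apply sum_distrib_right sum.swap[of _ L])

lemma fa_mult_sum_right: "fa_mult f (\<Sum>l\<in>L. G l) = (\<Sum>l\<in>L. fa_mult f (G l))"
  by (simp add: fa_mult_def fun_eq_iff sum_fun_apply sum_distrib_left sum.swap[of _ L])

lemma fa_mult_smult_left: "fa_mult (\<lambda>w. a * f w) g = (\<lambda>w. a * fa_mult f g w)"
  by (simp add: fa_mult_def fun_eq_iff sum_distrib_left mult.assoc)

lemma fa_mult_smult_right: "fa_mult f (\<lambda>w. a * g w) = (\<lambda>w. a * fa_mult f g w)"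
  by (simp add: fa_mult_def fun_eq_iff sum_distrib_left mult.left_commute)

lemma fa_mult_nonzeroD:
  assumes "fa_mult f g w \<noteq> 0"
  shows "\<exists>i\<le>length w. f (take i w) \<noteq> 0 \<and> g (drop i w) \<noteq> 0"
proof (rule ccontr)
  assume "\<not> ?thesis"
  then have "\<forall>i\<le>length w. f (take i w) * g (drop i w) = 0" by auto
  then show False using assms unfolding fa_mult_def by simp
qed

lemma fa_word_expansion:
  assumes "finite A" "{w. f w \<noteq> 0} \<subseteq> A"
  shows "f = (\<Sum>u\<in>A. (\<lambda>w. f u * fa_word u w))"
proof
  fix w
  have "(\<Sum>u\<in>A. f u * fa_word u w) = (\<Sum>u\<in>A. if u = w then f w else 0)"
    by (intro sum.cong) (auto simp: fa_word_def)
  also have "\<dots> = f w" using assms by auto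
  finally show "f w = (\<Sum>u\<in>A. (\<lambda>w. f u * fa_word u w)) w" by (simp add: sum_fun_apply)
qed

lemma lin_ext_eq_sum:
  assumes "finite S" "{w. f w \<noteq> 0} \<subseteq> S"
  shows "lin_ext K f i = (\<Sum>w\<in>S. f w * K w i)"
  unfolding lin_ext_def by (rule sum.mono_neutral_left) (use assms in auto)

lemma lin_ext_add:
  assumes "finite {w. f w \<noteq> 0}" "finite {w. g w \<noteq> 0}"
  shows "lin_ext K (f + g) i = lin_ext K f i + lin_ext K g i"
proof -
  let ?S = "{w. f w \<noteq> 0} \<union> {w. g w \<noteq> 0}"
  have "lin_ext K (f + g) i = (\<Sum>w\<in>?S. f w * K w i) + (\<Sum>w\<in>?S. g w * K w i)"
    by (subst lin_ext_eq_sum[of ?S]) (use assms in \<open>auto simp: sum.distrib distrib_right\<close>)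
  then show ?thesis using lin_ext_eq_sum[of ?S f K i] lin_ext_eq_sum[of ?S g K i] assms by auto
qed

lemma lin_ext_diff:
  assumes "finite {w. f w \<noteq> 0}" "finite {w. g w \<noteq> 0}"
  shows "lin_ext K (f - g) i = lin_ext K f i - lin_ext K g i"
proof -
  let ?S = "{w. f w \<noteq> 0} \<union> {w. g w \<noteq> 0}"
  have "lin_ext K (f - g) i = (\<Sum>w\<in>?S. f w * K w i) - (\<Sum>w\<in>?S. g w * K w i)"
    by (subst lin_ext_eq_sum[of ?S]) (use assms in \<open>auto simp: sum_subtractf left_diff_distrib\<close>)
  then show ?thesis using lin_ext_eq_sum[of ?S f K i] lin_ext_eq_sum[of ?S g K i] assms by auto
qed

lemma lin_ext_smult:
  assumes "finite {w. f w \<noteq> 0}"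
  shows "lin_ext K (\<lambda>w. a * f w) i = a * lin_ext K f i"
proof -
  have "lin_ext K (\<lambda>w. a * f w) i = (\<Sum>w\<in>{w. f w \<noteq> 0}. a * f w * K w i)"
    by (rule lin_ext_eq_sum) (use assms in auto)
  then show ?thesis unfolding lin_ext_def by (simp add: sum_distrib_left mult.assoc)
qed

lemma lin_ext_zero: "lin_ext K 0 i = 0"
  by (simp add: lin_ext_def)

lemma lin_ext_fa_word: "lin_ext K (fa_word u) i = K u i"
  using lin_ext_eq_sum[of "{u}" "fa_word u" K i] by (auto simp: fa_word_def)

lemma lin_ext_fa_word_diff: "lin_ext K (fa_word u - fa_word v) i = (K u i - K v i :: 'r::comm_ring_1)"
  by (simp add: lin_ext_diff finite_support_fa_word lin_ext_fa_word)

lemma lin_ext_sum: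
  assumes "finite L" "\<forall>l\<in>L. finite {w. F l w \<noteq> 0}"
  shows "lin_ext K (\<Sum>l\<in>L. F l) i = (\<Sum>l\<in>L. lin_ext K (F l) i)"
  using assms
proof (induction L rule: finite_induct)
  case empty then show ?case by (metis lin_ext_zero sum.empty)
next
  case (insert l L)
  have "lin_ext K (\<Sum>l\<in>insert l L. F l) i = lin_ext K (F l + (\<Sum>l\<in>L. F l)) i"
    using insert by simp
  also have "\<dots> = lin_ext K (F l) i + lin_ext K (\<Sum>l\<in>L. F l) i"
    by (rule lin_ext_add) (use insert finite_support_sum[of L F] in auto)
  also have "\<dots> = (\<Sum>l\<in>insert l L. lin_ext K (F l) i)" using insert by simp
  finally show ?case .
qed

lemma finite_support_smult:
  "finite {w. f w \<noteq> 0} \<Longrightarrow> finite {w. a * f w \<noteq> (0 :: 'r::mult_zero)}"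
  by (rule finite_subset[of _ "{w. f w \<noteq> 0}"]) auto

lemma fa_mult_expansion:
  assumes A: "finite A" "{w. f w \<noteq> 0} \<subseteq> A" and B: "finite B" "{w. g w \<noteq> 0} \<subseteq> B"
  shows "fa_mult f g = (\<Sum>u\<in>A. \<Sum>v\<in>B. (\<lambda>w. (f u * g v) * fa_word (u @ v) w))"
proof -
  have "fa_mult f g =
      fa_mult (\<Sum>u\<in>A. (\<lambda>w. f u * fa_word u w)) (\<Sum>v\<in>B. (\<lambda>w. g v * fa_word v w))"
    using fa_word_expansion[OF A] fa_word_expansion[OF B] by (rule arg_cong2[where f = fa_mult])
  also have "\<dots> = (\<Sum>u\<in>A. \<Sum>v\<in>B. fa_mult (\<lambda>w. f u * fa_word u w) (\<lambda>w. g v * fa_word v w))"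
    by (simp only: fa_mult_sum_left fa_mult_sum_right sum.swap[of _ B])
  also have "\<dots> = (\<Sum>u\<in>A. \<Sum>v\<in>B. (\<lambda>w. (f u * g v) * fa_word (u @ v) w))"
    by (simp only: fa_mult_smult_left fa_mult_smult_right fa_mult_fa_word mult.assoc)
  finally show ?thesis .
qed

lemma lin_ext_fa_mult:
  assumes A: "finite A" "{w. f w \<noteq> 0} \<subseteq> A" and B: "finite B" "{w. g w \<noteq> 0} \<subseteq> B"
  shows "lin_ext K (fa_mult f g) i = (\<Sum>u\<in>A. \<Sum>v\<in>B. f u * g v * K (u @ v) i)"
proof -
  have "lin_ext K (fa_mult f g) i =
      (\<Sum>u\<in>A. \<Sum>v\<in>B. lin_ext K (\<lambda>w. (f u * g v) * fa_word (u @ v) w) i)"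
    unfolding fa_mult_expansion[OF A B] using A(1) B(1)
    by (simp add: lin_ext_sum finite_support_sum finite_support_smult finite_support_fa_word)
  then show ?thesis by (simp add: lin_ext_smult finite_support_fa_word lin_ext_fa_word)
qed

lemma in_fa_carrier_iff:
  "f \<in> fa_carrier R G \<longleftrightarrow>
     finite {w. f w \<noteq> 0} \<and> f [] = 0 \<and> (\<forall>w. f w \<noteq> 0 \<longrightarrow> set w \<subseteq> kp_gens G)"
  by (simp add: fa_carrier_def)

lemma fa_carrier_fa_word:
  "u \<noteq> [] \<Longrightarrow> set u \<subseteq> kp_gens G \<Longrightarrow> (fa_word u :: _ \<Rightarrow> 'r) \<in> fa_carrier (R :: 'r::comm_ring_1 itself) G"
  unfolding in_fa_carrier_iff fa_word_def by auto

lemma fa_carrier_zero: "0 \<in> fa_carrier R G"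
  unfolding in_fa_carrier_iff by simp

lemma fa_carrier_add:
  assumes "f \<in> fa_carrier R G" "g \<in> fa_carrier R G"
  shows "f + g \<in> fa_carrier R G"
proof -
  have supp: "{w. (f + g) w \<noteq> 0} \<subseteq> {w. f w \<noteq> 0} \<union> {w. g w \<noteq> 0}" by auto
  then have "finite {w. (f + g) w \<noteq> 0}"
    using assms by (auto simp: in_fa_carrier_iff intro: finite_subset)
  then show ?thesis using assms supp unfolding in_fa_carrier_iff by blast
qed

lemma fa_carrier_smult:
  assumes "f \<in> fa_carrier R G"
  shows "(\<lambda>w. a * f w) \<in> fa_carrier R G"
proof -
  have "finite {w. a * f w \<noteq> 0}"
    using assms finite_support_smult unfolding in_fa_carrier_iff by blast
  moreover have "\<forall>w. a * f w \<noteq> 0 \<longrightarrow> f w \<noteq> 0" by auto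
  ultimately show ?thesis using assms unfolding in_fa_carrier_iff by auto
qed

lemma fa_carrier_diff: "f \<in> fa_carrier R G \<Longrightarrow> g \<in> fa_carrier R G \<Longrightarrow> f - g \<in> fa_carrier R G"
  using fa_carrier_add[of f R G "- g"] unfolding in_fa_carrier_iff by auto

lemma fa_carrier_sum: "(\<forall>l\<in>L. F l \<in> fa_carrier R G) \<Longrightarrow> (\<Sum>l\<in>L. F l) \<in> fa_carrier R G"
  by (induction L rule: infinite_finite_induct) (auto intro: fa_carrier_add fa_carrier_zero)

lemma fa_carrier_mult:
  assumes "f \<in> fa_carrier R G" "g \<in> fa_carrier R G"
  shows "fa_mult f g \<in> fa_carrier R G"
proof -
  have "{w. fa_mult f g w \<noteq> 0} \<subseteq> (\<lambda>(u, v). u @ v) ` ({w. f w \<noteq> 0} \<times> {w. g w \<noteq> 0})"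
  proof
    fix w assume "w \<in> {w. fa_mult f g w \<noteq> 0}"
    then obtain j where "f (take j w) \<noteq> 0" "g (drop j w) \<noteq> 0" using fa_mult_nonzeroD by force
    then show "w \<in> (\<lambda>(u, v). u @ v) ` ({w. f w \<noteq> 0} \<times> {w. g w \<noteq> 0})"
      by (auto intro!: image_eqI[where x="(take j w, drop j w)"])
  qed
  then have "finite {w. fa_mult f g w \<noteq> 0}"
    by (rule finite_subset) (use assms in \<open>simp add: in_fa_carrier_iff\<close>)
  moreover have "fa_mult f g [] = 0" using assms unfolding in_fa_carrier_iff fa_mult_def by simp
  moreover have "set w \<subseteq> kp_gens G" if nz: "fa_mult f g w \<noteq> 0" for w
  proof -
    obtain j where "f (take j w) \<noteq> 0" "g (drop j w) \<noteq> 0" using fa_mult_nonzeroD[OF nz] by force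
    then have "set (take j w) \<subseteq> kp_gens G" "set (drop j w) \<subseteq> kp_gens G"
      using assms unfolding in_fa_carrier_iff by blast+
    then show ?thesis by (metis append_take_drop_id set_append le_sup_iff)
  qed
  ultimately show ?thesis unfolding in_fa_carrier_iff by blast
qed

lemma kp_rels_cases:
  assumes "f \<in> kp_rels (R :: 'r::comm_ring_1 itself) G"
  obtains (KP1) v w where "v \<in> vertices G" "w \<in> vertices G"
      "f = fa_word [GP v, GP w] - (if v = w then fa_word [GP v] else 0)"
  | (KP2_S) x y where "x \<in> paths G" "y \<in> paths G" "deg G x \<noteq> 0" "deg G y \<noteq> 0"
      "src G x = rng G y" "f = fa_word [GS x, GS y] - fa_word [GS (cmp G x y)]"
  | (KP2_Ss) x y where "x \<in> paths G" "y \<in> paths G" "deg G x \<noteq> 0" "deg G y \<noteq> 0"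
      "src G x = rng G y" "f = fa_word [GSs y, GSs x] - fa_word [GSs (cmp G x y)]"
  | (KP2_rng_S) x where "x \<in> paths G" "deg G x \<noteq> 0"
      "f = fa_word [GP (rng G x), GS x] - fa_word [GS x]"
  | (KP2_S_src) x where "x \<in> paths G" "deg G x \<noteq> 0"
      "f = fa_word [GS x, GP (src G x)] - fa_word [GS x]"
  | (KP2_src_Ss) x where "x \<in> paths G" "deg G x \<noteq> 0"
      "f = fa_word [GP (src G x), GSs x] - fa_word [GSs x]"
  | (KP2_Ss_rng) x where "x \<in> paths G" "deg G x \<noteq> 0"
      "f = fa_word [GSs x, GP (rng G x)] - fa_word [GSs x]"
  | (KP3) x y where "x \<in> paths G" "y \<in> paths G" "deg G x \<noteq> 0" "deg G y \<noteq> 0"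
      "deg G x = deg G y" "f = fa_word [GSs x, GS y] - (if x = y then fa_word [GP (src G x)] else 0)"
  | (KP4) v n where "v \<in> vertices G" "n \<noteq> 0"
      "f = fa_word [GP v] - (\<Sum>x\<in>{x \<in> paths G. deg G x = n \<and> rng G x = v}. fa_word [GS x, GSs x])"
  using assms unfolding kp_rels_def fa_gen_eq_fa_word fa_mult_fa_word_single
  by (elim UnE CollectE exE conjE) (rule that; assumption)+

lemmas kp_rels_unfolded = kp_rels_def[unfolded fa_gen_eq_fa_word fa_mult_fa_word_single]

lemma kp_rels_KP1:
  "v \<in> vertices G \<Longrightarrow> w \<in> vertices G \<Longrightarrow>
    (fa_word [GP v, GP w] - (if v = w then fa_word [GP v] else 0) :: _ \<Rightarrow> 'r::comm_ring_1) \<in> kp_rels R G"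
  unfolding kp_rels_unfolded by (rule UnI1)+ blast

lemma kp_rels_KP2_S:
  "x \<in> paths G \<Longrightarrow> y \<in> paths G \<Longrightarrow> deg G x \<noteq> 0 \<Longrightarrow> deg G y \<noteq> 0 \<Longrightarrow> src G x = rng G y \<Longrightarrow>
    (fa_word [GS x, GS y] - fa_word [GS (cmp G x y)] :: _ \<Rightarrow> 'r::comm_ring_1) \<in> kp_rels R G"
  unfolding kp_rels_unfolded
  by (rule UnI1, rule UnI1, rule UnI1, rule UnI1, rule UnI1, rule UnI1, rule UnI1, rule UnI2) blast

lemma kp_rels_KP2_Ss:
  "x \<in> paths G \<Longrightarrow> y \<in> paths G \<Longrightarrow> deg G x \<noteq> 0 \<Longrightarrow> deg G y \<noteq> 0 \<Longrightarrow> src G x = rng G y \<Longrightarrow>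
    (fa_word [GSs y, GSs x] - fa_word [GSs (cmp G x y)] :: _ \<Rightarrow> 'r::comm_ring_1) \<in> kp_rels R G"
  unfolding kp_rels_unfolded
  by (rule UnI1, rule UnI1, rule UnI1, rule UnI1, rule UnI1, rule UnI1, rule UnI2) blast

lemma kp_rels_KP2_rng_S:
  "x \<in> paths G \<Longrightarrow> deg G x \<noteq> 0 \<Longrightarrow>
    (fa_word [GP (rng G x), GS x] - fa_word [GS x] :: _ \<Rightarrow> 'r::comm_ring_1) \<in> kp_rels R G"
  unfolding kp_rels_unfolded
  by (rule UnI1, rule UnI1, rule UnI1, rule UnI1, rule UnI1, rule UnI2) blast

lemma kp_rels_KP2_S_src:
  "x \<in> paths G \<Longrightarrow> deg G x \<noteq> 0 \<Longrightarrow>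
    (fa_word [GS x, GP (src G x)] - fa_word [GS x] :: _ \<Rightarrow> 'r::comm_ring_1) \<in> kp_rels R G"
  unfolding kp_rels_unfolded by (rule UnI1, rule UnI1, rule UnI1, rule UnI1, rule UnI2) blast

lemma kp_rels_KP2_Ss_rng:
  "x \<in> paths G \<Longrightarrow> deg G x \<noteq> 0 \<Longrightarrow>
    (fa_word [GSs x, GP (rng G x)] - fa_word [GSs x] :: _ \<Rightarrow> 'r::comm_ring_1) \<in> kp_rels R G"
  unfolding kp_rels_unfolded by (rule UnI1, rule UnI1, rule UnI2) blast

lemma kp_rels_KP3:
  "x \<in> paths G \<Longrightarrow> y \<in> paths G \<Longrightarrow> deg G x \<noteq> 0 \<Longrightarrow> deg G y \<noteq> 0 \<Longrightarrow> deg G x = deg G y \<Longrightarrow>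
    (fa_word [GSs x, GS y] - (if x = y then fa_word [GP (src G x)] else 0) :: _ \<Rightarrow> 'r::comm_ring_1)
      \<in> kp_rels R G"
  unfolding kp_rels_unfolded by (rule UnI1, rule UnI2) blast

lemma kp_rels_KP4:
  "v \<in> vertices G \<Longrightarrow> n \<noteq> 0 \<Longrightarrow>
    (fa_word [GP v] - (\<Sum>x\<in>{x \<in> paths G. deg G x = n \<and> rng G x = v}. fa_word [GS x, GSs x])
      :: _ \<Rightarrow> 'r::comm_ring_1) \<in> kp_rels R G"
  unfolding kp_rels_unfolded by (rule UnI2) blast

lemma kp_ideal_uminus: "f \<in> kp_ideal R G \<Longrightarrow> - f \<in> kp_ideal R G"
  using kp_ideal.smult[of f R G "- 1"] by (simp add: fun_Compl_def)

lemma kp_ideal_sum: "(\<forall>u\<in>A. F u \<in> kp_ideal R G) \<Longrightarrow> (\<Sum>u\<in>A. F u) \<in> kp_ideal R G"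
  by (induction A rule: infinite_finite_induct) (auto intro: kp_ideal.add kp_ideal.zero)

context k_graph
begin

lemma kp_rels_in_fa_carrier:
  assumes "f \<in> kp_rels R G"
  shows "f \<in> fa_carrier R G"
proof -
  have gens: "GS x \<in> kp_gens G" "GSs x \<in> kp_gens G" "GP (r x) \<in> kp_gens G"
    "GP (s x) \<in> kp_gens G" if "x \<in> P" "d x \<noteq> 0" for x
    using that rng_in_vertices src_in_vertices unfolding kp_gens_def by auto
  have vertex: "GP v \<in> kp_gens G" if "v \<in> vertices G" for v
    using that unfolding kp_gens_def by auto
  have cmp: "c x y \<in> P" "d (c x y) \<noteq> 0" if "x \<in> P" "y \<in> P" "d x \<noteq> 0" "s x = r y" for x y
    using that cmp_in deg_cmp by (auto simp: add_eq_0_iff_fun)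
  from assms show ?thesis
    by (cases rule: kp_rels_cases)
      (auto intro!: fa_carrier_diff fa_carrier_fa_word fa_carrier_zero fa_carrier_sum
        simp: gens vertex cmp)
qed

lemma kp_ideal_in_fa_carrier:
  assumes "f \<in> kp_ideal R G"
  shows "f \<in> fa_carrier R G"
  using assms
proof induction
  case (rel f) then show ?case by (rule kp_rels_in_fa_carrier)
next
  case zero then show ?case by (rule fa_carrier_zero)
next
  case (add f g) then show ?case by (blast intro: fa_carrier_add)
next
  case (smult f a) then show ?case by (blast intro: fa_carrier_smult)
next
  case (lmult f h) then show ?case by (blast intro: fa_carrier_mult)
next
  case (rmult f h) then show ?case by (blast intro: fa_carrier_mult)
qed

lemma finite_support_kp_ideal: "f \<in> kp_ideal R G \<Longrightarrow> finite {w. f w \<noteq> 0}"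
  using kp_ideal_in_fa_carrier in_fa_carrier_iff by blast

end

section \<open>The representation on infinite paths\<close>

text \<open>A word \<open>w\<close> acts on functions \<open>\<xi>\<close> on infinite paths by \<open>(T\<^sub>w \<xi>) x = \<xi> (w \<cdot> x)\<close>, where the
  partial action \<open>word_act\<close> lets \<open>p\<^sub>v\<close> keep the paths starting at \<open>v\<close>, \<open>s\<^sub>\<lambda>\<close> delete an initial
  segment \<open>\<lambda>\<close> and \<open>s\<^sub>\<lambda>\<^sup>*\<close> prepend \<open>\<lambda>\<close>; undefined means \<open>0\<close>. This is the usual representation of
  \<open>KP\<^sub>R(\<Lambda>)\<close> on functions on \<open>\<Lambda>\<^sup>\<infinity>\<close>, and \<open>lin_ext act_eval f (\<xi>, x) = (T\<^sub>f \<xi>) x\<close>.\<close>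

context k_graph
begin

fun gen_act :: "'a kpgen \<Rightarrow> (('k \<Rightarrow> nat) \<Rightarrow> 'a) \<Rightarrow> (('k \<Rightarrow> nat) \<Rightarrow> 'a) option" where
  "gen_act (GP v) x = (if x 0 = v then Some x else None)"
| "gen_act (GS l) x = (if x (d l) = l then Some (shift (d l) x) else None)"
| "gen_act (GSs l) x = (if l \<in> P \<and> x 0 = s l then Some (prepend l x) else None)"

fun word_act :: "'a kpgen list \<Rightarrow> (('k \<Rightarrow> nat) \<Rightarrow> 'a) \<Rightarrow> (('k \<Rightarrow> nat) \<Rightarrow> 'a) option" where
  "word_act [] x = Some x"
| "word_act (g # w) x = Option.bind (gen_act g x) (word_act w)"

definition act_eval ::
  "'a kpgen list \<Rightarrow> ((('k \<Rightarrow> nat) \<Rightarrow> 'a) \<Rightarrow> 'r) \<times> (('k \<Rightarrow> nat) \<Rightarrow> 'a) \<Rightarrow> 'r::comm_ring_1" where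
  "act_eval w p = (case word_act w (snd p) of None \<Rightarrow> 0 | Some y \<Rightarrow> fst p y)"

lemma word_act_single [simp]: "word_act [g] x = gen_act g x"
  by (cases "gen_act g x") auto

lemma word_act_two: "word_act [a, b] x = Option.bind (gen_act a x) (gen_act b)"
proof -
  have "word_act [b] = gen_act b" by (rule ext) (rule word_act_single)
  then show ?thesis by simp
qed

lemma word_act_append: "word_act (u @ w) x = Option.bind (word_act u x) (word_act w)"
proof (induction u arbitrary: x)
  case Nil show ?case by simp
next
  case (Cons g u)
  have "word_act (u @ w) = (\<lambda>y. Option.bind (word_act u y) (word_act w))"
    using Cons.IH by (rule ext)
  then show ?case by (simp add: Option.bind_assoc)
qed

lemma word_act_in_inf_paths: "x \<in> inf_paths \<Longrightarrow> word_act w x = Some y \<Longrightarrow> y \<in> inf_paths"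
proof (induction w arbitrary: x)
  case Nil then show ?case by simp
next
  case (Cons g w)
  then obtain z where "gen_act g x = Some z" "word_act w z = Some y"
    by (cases "gen_act g x") auto
  moreover have "z \<in> inf_paths"
    using Cons.prems(1) calculation(1)
    by (cases g) (auto split: if_splits intro: shift_in_inf_paths prepend_in_inf_paths)
  ultimately show ?case using Cons.IH by blast
qed

lemma act_eval_append:
  "act_eval (u @ w) (\<xi>, x) = (case word_act u x of None \<Rightarrow> 0 | Some y \<Rightarrow> act_eval w (\<xi>, y))"
  unfolding act_eval_def word_act_append by (cases "word_act u x") (auto split: option.split)

lemma lin_ext_act_eval_fa_word_diff:
  "word_act u z = word_act u' z \<Longrightarrow>
     lin_ext act_eval (fa_word u - fa_word u') (\<xi>, z) = (0::'r::comm_ring_1)"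
  by (simp add: lin_ext_fa_word_diff act_eval_def)

lemma lin_ext_act_eval_fa_word_None:
  "word_act u z = None \<Longrightarrow> lin_ext act_eval (fa_word u) (\<xi>, z) = (0::'r::comm_ring_1)"
  by (simp add: lin_ext_fa_word act_eval_def)

context
  fixes z assumes z: "z \<in> inf_paths"
begin

lemma word_act_S_cmp:
  assumes "x \<in> P" "y \<in> P" "s x = r y"
  shows "word_act [GS x, GS y] z = word_act [GS (c x y)] z"
  using inf_path_cmp_iff[OF z assms] shift_shift[OF z, where p = "d x" and q = "d y"] deg_cmp[OF assms]
  by (auto simp: word_act_two)

lemma word_act_Ss_cmp:
  assumes "x \<in> P" "y \<in> P" "s x = r y"
  shows "word_act [GSs y, GSs x] z = word_act [GSs (c x y)] z"
proof (cases "z 0 = s y")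
  case True
  then show ?thesis
    using prepend_0[OF z assms(2) True[symmetric]] prepend_prepend[OF z assms True[symmetric]]
      src_cmp[OF assms] cmp_in[OF assms] assms
    by (auto simp: word_act_two)
next
  case False
  then show ?thesis using src_cmp[OF assms] by (auto simp: word_act_two)
qed

lemma word_act_rng_S: "word_act [GP (r x), GS x] z = word_act [GS x] z"
  using rng_inf_path[OF z, of "d x"] by (auto simp: word_act_two)

lemma word_act_S_src: "x \<in> P \<Longrightarrow> word_act [GS x, GP (s x)] z = word_act [GS x] z"
  using shift_0[OF z, of "d x"] by (auto simp: word_act_two)

lemma word_act_src_Ss: "word_act [GP (s x), GSs x] z = word_act [GSs x] z"
  by (auto simp: word_act_two)

lemma word_act_Ss_rng: "word_act [GSs x, GP (r x)] z = word_act [GSs x] z"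
  using prepend_0[OF z] by (auto simp: word_act_two)

lemma word_act_Ss_S: "x \<in> P \<Longrightarrow> word_act [GSs x, GS x] z = word_act [GP (s x)] z"
  using prepend_deg[OF z] shift_prepend[OF z] by (auto simp: word_act_two)

lemma word_act_Ss_S_None:
  assumes "x \<in> P" "x \<noteq> y" "d x = d y"
  shows "word_act [GSs x, GS y] z = None"
  using prepend_deg[OF z assms(1)] assms by (auto simp: word_act_two)

text \<open>(KP4): exactly one path of degree \<open>n\<close> at \<open>z 0\<close>, namely \<open>z n\<close>, is an initial segment of \<open>z\<close>.\<close>

lemma act_eval_vertex_sum:
  assumes "row_finite G" "v \<in> vertices G"
  shows "(\<Sum>l\<in>{x \<in> P. d x = n \<and> r x = v}. act_eval [GS l, GSs l] (\<xi>, z)) =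
           (act_eval [GP v] (\<xi>, z) :: 'r::comm_ring_1)"
proof -
  let ?L = "{x \<in> P. d x = n \<and> r x = v}"
  have "finite ?L" using assms unfolding row_finite_def by blast
  have "act_eval [GS l, GSs l] (\<xi>, z) = (if z n = l then \<xi> z else 0)" if "l \<in> ?L" for l
    using that shift_0[OF z, of n] prepend_shift[OF z, of l]
    by (auto simp: act_eval_def word_act_two)
  then have "(\<Sum>l\<in>?L. act_eval [GS l, GSs l] (\<xi>, z)) = (\<Sum>l\<in>?L. if z n = l then \<xi> z else 0)"
    by (rule sum.cong[OF refl])
  also have "\<dots> = (if z n \<in> ?L then \<xi> z else 0)"
    using sum.delta'[OF \<open>finite ?L\<close>, of "z n" "\<lambda>_. \<xi> z"] by simp
  also have "z n \<in> ?L \<longleftrightarrow> z 0 = v"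
    using inf_pathsD(1,2)[OF z] rng_inf_path[OF z] by auto
  finally show ?thesis by (simp add: act_eval_def)
qed

lemma lin_ext_act_eval_kp_rels:
  assumes "row_finite G" "f \<in> kp_rels (R :: 'r::comm_ring_1 itself) G"
  shows "lin_ext act_eval f (\<xi>, z) = (0 :: 'r)"
  using assms(2)
proof (cases rule: kp_rels_cases)
  case (KP1 v w)
  then show ?thesis
    by (cases "v = w") (simp_all add: lin_ext_act_eval_fa_word_diff lin_ext_act_eval_fa_word_None word_act_two)
next
  case (KP3 x y)
  then show ?thesis
    by (cases "x = y")
      (simp_all add: lin_ext_act_eval_fa_word_diff lin_ext_act_eval_fa_word_None
        word_act_Ss_S word_act_Ss_S_None del: word_act.simps)
next
  case (KP4 v n)
  let ?L = "{x \<in> P. d x = n \<and> r x = v}"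
  have "finite ?L" using assms(1) KP4(1) unfolding row_finite_def by blast
  then have "lin_ext act_eval f (\<xi>, z) =
      act_eval [GP v] (\<xi>, z) - (\<Sum>l\<in>?L. act_eval [GS l, GSs l] (\<xi>, z))"
    unfolding KP4(3)
    by (simp add: lin_ext_diff lin_ext_sum lin_ext_fa_word finite_support_sum
        finite_support_fa_word)
  then show ?thesis unfolding act_eval_vertex_sum[OF assms(1) KP4(1)] by simp
qed (simp_all add: lin_ext_act_eval_fa_word_diff word_act_S_cmp word_act_Ss_cmp word_act_rng_S
      word_act_S_src word_act_src_Ss word_act_Ss_rng del: word_act.simps)

end

lemma lin_ext_act_eval_fa_mult_left:
  assumes "finite {w. h w \<noteq> 0}" "finite {w. f w \<noteq> 0}"
    and f: "\<forall>\<xi>. \<forall>y\<in>inf_paths. lin_ext act_eval f (\<xi>, y) = (0::'r::comm_ring_1)"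
    and x: "x \<in> inf_paths"
  shows "lin_ext act_eval (fa_mult h f) (\<xi>, x) = 0"
proof -
  let ?A = "{w. h w \<noteq> 0}" and ?B = "{w. f w \<noteq> 0}"
  have "(\<Sum>v\<in>?B. h u * f v * act_eval (u @ v) (\<xi>, x)) = 0" for u
  proof (cases "word_act u x")
    case (Some y)
    then have "(\<Sum>v\<in>?B. h u * f v * act_eval (u @ v) (\<xi>, x)) = h u * lin_ext act_eval f (\<xi>, y)"
      by (simp add: act_eval_append sum_distrib_left mult.assoc lin_ext_def)
    then show ?thesis using f word_act_in_inf_paths[OF x Some] by simp
  qed (simp add: act_eval_append)
  then show ?thesis
    using lin_ext_fa_mult[OF assms(1) subset_refl assms(2) subset_refl,
        where K = act_eval and i = "(\<xi>, x)"] by simp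
qed

lemma lin_ext_act_eval_fa_mult_right:
  assumes "finite {w. f w \<noteq> 0}" "finite {w. h w \<noteq> 0}"
    and f: "\<forall>\<xi>. \<forall>y\<in>inf_paths. lin_ext act_eval f (\<xi>, y) = (0::'r::comm_ring_1)"
    and x: "x \<in> inf_paths"
  shows "lin_ext act_eval (fa_mult f h) (\<xi>, x) = 0"
proof -
  let ?A = "{w. f w \<noteq> 0}" and ?B = "{w. h w \<noteq> 0}"
  define \<xi>' where "\<xi>' y = lin_ext act_eval h (\<xi>, y)" for y
  have "(\<Sum>v\<in>?B. f u * h v * act_eval (u @ v) (\<xi>, x)) = f u * act_eval u (\<xi>', x)" for u
  proof (cases "word_act u x")
    case None then show ?thesis by (simp add: act_eval_def word_act_append)
  next
    case (Some y)
    then have "act_eval u (\<xi>', x) = lin_ext act_eval h (\<xi>, y)" by (simp add: act_eval_def \<xi>'_def)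
    then show ?thesis
      using Some by (simp add: act_eval_append lin_ext_def sum_distrib_left mult.assoc)
  qed
  then have "lin_ext act_eval (fa_mult f h) (\<xi>, x) = (\<Sum>u\<in>?A. f u * act_eval u (\<xi>', x))"
    using lin_ext_fa_mult[OF assms(1) subset_refl assms(2) subset_refl,
        where K = act_eval and i = "(\<xi>, x)"] by simp
  also have "\<dots> = lin_ext act_eval f (\<xi>', x)" by (simp add: lin_ext_def)
  finally show ?thesis using f x by simp
qed

theorem lin_ext_act_eval_kp_ideal:
  assumes "row_finite G" "f \<in> kp_ideal (R::'r::comm_ring_1 itself) G"
  shows "\<forall>\<xi>. \<forall>x\<in>inf_paths. lin_ext act_eval f (\<xi>, x) = (0::'r)"
  using assms(2)
proof induction
  case (rel f)
  then show ?case using lin_ext_act_eval_kp_rels[OF _ assms(1)] by blast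
next
  case zero
  then show ?case by (simp add: lin_ext_def)
next
  case (add f g)
  then show ?case by (simp only: lin_ext_add finite_support_kp_ideal) simp
next
  case (smult f a)
  then show ?case by (simp add: lin_ext_smult finite_support_kp_ideal)
next
  case (lmult f h)
  then show ?case
    using lin_ext_act_eval_fa_mult_left in_fa_carrier_iff finite_support_kp_ideal by blast
next
  case (rmult f h)
  then show ?case
    using lin_ext_act_eval_fa_mult_right in_fa_carrier_iff finite_support_kp_ideal by blast
qed

lemma kp_commutative_word_act_swap:
  assumes "row_finite G" "(1::'r::comm_ring_1) \<noteq> 0" "kp_commutative TYPE('r) G"
    and "a \<in> kp_gens G" "b \<in> kp_gens G"
    and z: "z \<in> inf_paths" "word_act [a, b] z \<noteq> None"
  shows "word_act [b, a] z \<noteq> None"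
proof
  assume ba: "word_act [b, a] z = None"
  have "(fa_word [a] :: _ \<Rightarrow> 'r) \<in> fa_carrier TYPE('r) G" "(fa_word [b] :: _ \<Rightarrow> 'r) \<in> fa_carrier TYPE('r) G"
    using assms(4,5) by (auto intro!: fa_carrier_fa_word)
  then have "fa_mult (fa_word [a]) (fa_word [b]) - fa_mult (fa_word [b]) (fa_word [a])
      \<in> kp_ideal TYPE('r) G"
    using assms(3) unfolding kp_commutative_def by blast
  then have "(fa_word [a, b] - fa_word [b, a] :: _ \<Rightarrow> 'r) \<in> kp_ideal TYPE('r) G"
    by (simp add: fa_mult_fa_word)
  then have "lin_ext act_eval (fa_word [a, b] - fa_word [b, a] :: _ \<Rightarrow> 'r) ((\<lambda>_. 1), z) = 0"
    using lin_ext_act_eval_kp_ideal[OF assms(1)] z(1) by blast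
  then show False using z(2) ba assms(2) by (auto simp: lin_ext_fa_word_diff act_eval_def)
qed

lemma inf_path_through:
  assumes "finite (UNIV :: 'k set)" "no_sources G" "l \<in> P"
  obtains z where "z \<in> inf_paths" "z (d l) = l" "z 0 = r l"
proof -
  obtain y where y: "y \<in> inf_paths" "y 0 = s l"
    using inf_path_exists[OF assms(1,2) src_in_vertices[OF assms(3)]] by blast
  show thesis
    by (rule that[of "prepend l y"])
      (use prepend_in_inf_paths prepend_deg prepend_0 y assms(3) in auto)
qed

lemma kp_commutative_rng_eq_src:
  assumes "finite (UNIV :: 'k set)" "row_finite G" "no_sources G" "(1::'r::comm_ring_1) \<noteq> 0"
    and comm: "kp_commutative TYPE('r) G" and l: "l \<in> P"
  shows "r l = s l"
proof (cases "d l = 0")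
  case True then show ?thesis using rng_deg_0 src_deg_0 l by simp
next
  case False
  obtain z where z: "z \<in> inf_paths" "z (d l) = l" "z 0 = r l"
    using inf_path_through[OF assms(1,3) l] .
  have "GS l \<in> kp_gens G" "GP (r l) \<in> kp_gens G"
    using l False rng_in_vertices unfolding kp_gens_def by auto
  moreover have "word_act [GP (r l), GS l] z \<noteq> None" using z by (simp add: word_act_two)
  ultimately have "word_act [GS l, GP (r l)] z \<noteq> None"
    using kp_commutative_word_act_swap[OF assms(2,4) comm _ _ z(1)] by blast
  then show ?thesis using z shift_0[OF z(1), of "d l"] by (auto simp: word_act_two split: if_splits)
qed

lemma kp_commutative_inj_rng:
  assumes "finite (UNIV :: 'k set)" "row_finite G" "no_sources G" "(1::'r::comm_ring_1) \<noteq> 0"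
    and comm: "kp_commutative TYPE('r) G"
  shows "inj_on r {x \<in> P. d x = n}"
proof
  fix x y assume x: "x \<in> {x \<in> P. d x = n}" and y: "y \<in> {x \<in> P. d x = n}" and "r x = r y"
  then have rs: "s x = s y" "r y = s y"
    using kp_commutative_rng_eq_src[OF assms] by auto
  show "x = y"
  proof (rule ccontr)
    assume "x \<noteq> y"
    then have "n \<noteq> 0" using rng_deg_0 x y \<open>r x = r y\<close> by auto
    obtain z where z: "z \<in> inf_paths" "z (d y) = y" "z 0 = r y"
      using inf_path_through[OF assms(1,3)] y by blast
    have "GS y \<in> kp_gens G" "GSs x \<in> kp_gens G"
      using x y \<open>n \<noteq> 0\<close> unfolding kp_gens_def by auto
    moreover have "word_act [GS y, GSs x] z \<noteq> None"
      using z shift_0[OF z(1), of "d y"] rs x by (simp add: word_act_two)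
    ultimately have "word_act [GSs x, GS y] z \<noteq> None"
      using kp_commutative_word_act_swap[OF assms(2,4) comm _ _ z(1)] by blast
    then show False
      using word_act_Ss_S_None[OF z(1)] \<open>x \<noteq> y\<close> x y by auto
  qed
qed

end

definition kp_eq :: "'r::comm_ring_1 itself \<Rightarrow> ('a, 'k) kgraph \<Rightarrow> 'a kpgen list \<Rightarrow> 'a kpgen list \<Rightarrow> bool" where
  "kp_eq R G u v \<longleftrightarrow> (fa_word u - fa_word v :: _ \<Rightarrow> 'r) \<in> kp_ideal R G"

definition kp_zero :: "'r::comm_ring_1 itself \<Rightarrow> ('a, 'k) kgraph \<Rightarrow> 'a kpgen list \<Rightarrow> bool" where
  "kp_zero R G u \<longleftrightarrow> (fa_word u :: _ \<Rightarrow> 'r) \<in> kp_ideal R G"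

lemma kp_eq_sym: "kp_eq R G u v \<Longrightarrow> kp_eq R G v u"
  unfolding kp_eq_def using kp_ideal_uminus by fastforce

lemma kp_eq_trans [trans]: "kp_eq R G u v \<Longrightarrow> kp_eq R G v w \<Longrightarrow> kp_eq R G u w"
  unfolding kp_eq_def using kp_ideal.add by fastforce

lemma kp_zero_kp_eq: "kp_eq R G u v \<Longrightarrow> kp_zero R G v \<Longrightarrow> kp_zero R G u"
  unfolding kp_eq_def kp_zero_def using kp_ideal.add by fastforce

lemma fa_mult_fa_word_Nil_left: "fa_mult (fa_word []) f = (f :: _ \<Rightarrow> 'r::comm_ring_1)"
proof
  fix w
  have "fa_mult (fa_word []) f w = (\<Sum>i\<le>length w. if i = 0 then f w else 0)"
    unfolding fa_mult_def fa_word_def by (intro sum.cong) auto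
  then show "fa_mult (fa_word []) f w = f w" by simp
qed

lemma fa_mult_fa_word_Nil_right: "fa_mult f (fa_word []) = (f :: _ \<Rightarrow> 'r::comm_ring_1)"
proof
  fix w
  have "fa_mult f (fa_word []) w = (\<Sum>i\<le>length w. if i = length w then f w else 0)"
    unfolding fa_mult_def fa_word_def by (intro sum.cong) auto
  then show "fa_mult f (fa_word []) w = f w" by simp
qed

lemma kp_ideal_fa_mult_fa_word:
  assumes "f \<in> kp_ideal (R :: 'r::comm_ring_1 itself) G" "set p \<subseteq> kp_gens G" "set q \<subseteq> kp_gens G"
  shows "fa_mult (fa_word p) (fa_mult f (fa_word q)) \<in> kp_ideal R G"
proof -
  have "fa_mult f (fa_word q) \<in> kp_ideal R G"
    using assms(1,3)
    by (cases "q = []") (auto simp: fa_mult_fa_word_Nil_right intro: kp_ideal.rmult fa_carrier_fa_word)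
  then show ?thesis
    using assms(2)
    by (cases "p = []") (auto simp: fa_mult_fa_word_Nil_left intro: kp_ideal.lmult fa_carrier_fa_word)
qed

lemma kp_eq_cong:
  assumes "kp_eq (R :: 'r::comm_ring_1 itself) G u v" "set p \<subseteq> kp_gens G" "set q \<subseteq> kp_gens G"
    and "w = p @ u @ q" "w' = p @ v @ q"
  shows "kp_eq R G w w'"
  using kp_ideal_fa_mult_fa_word[OF assms(1)[unfolded kp_eq_def] assms(2,3)] assms(4,5)
  unfolding kp_eq_def by (simp add: fa_mult_diff_left fa_mult_diff_right fa_mult_fa_word)

lemma kp_zero_cong:
  assumes "kp_zero (R :: 'r::comm_ring_1 itself) G u" "set p \<subseteq> kp_gens G" "set q \<subseteq> kp_gens G"
    and "w = p @ u @ q"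
  shows "kp_zero R G w"
  using kp_ideal_fa_mult_fa_word[OF assms(1)[unfolded kp_zero_def] assms(2,3)] assms(4)
  unfolding kp_zero_def by (simp add: fa_mult_fa_word)

context k_graph
begin

lemma kp_rel_kp_eq:
  "(fa_word u - fa_word v :: _ \<Rightarrow> 'r) \<in> kp_rels R G \<Longrightarrow> kp_eq (R :: 'r::comm_ring_1 itself) G u v"
  unfolding kp_eq_def by (rule kp_ideal.rel)

lemma kp_zero_vertex_vertex:
  assumes "v \<in> vertices G" "w \<in> vertices G" "v \<noteq> w"
  shows "kp_zero (R::'r::comm_ring_1 itself) G [GP v, GP w]"
  using kp_ideal.rel[OF kp_rels_KP1[OF assms(1,2)]] assms(3) unfolding kp_zero_def by simp

lemma kp_eq_S_cmp:
  "x \<in> P \<Longrightarrow> y \<in> P \<Longrightarrow> d x \<noteq> 0 \<Longrightarrow> d y \<noteq> 0 \<Longrightarrow> s x = r y \<Longrightarrow>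
     kp_eq (R::'r::comm_ring_1 itself) G [GS x, GS y] [GS (c x y)]"
  by (intro kp_rel_kp_eq kp_rels_KP2_S)

lemma kp_eq_Ss_cmp:
  "x \<in> P \<Longrightarrow> y \<in> P \<Longrightarrow> d x \<noteq> 0 \<Longrightarrow> d y \<noteq> 0 \<Longrightarrow> s x = r y \<Longrightarrow>
     kp_eq (R::'r::comm_ring_1 itself) G [GSs y, GSs x] [GSs (c x y)]"
  by (intro kp_rel_kp_eq kp_rels_KP2_Ss)

lemma kp_eq_rng_S: "x \<in> P \<Longrightarrow> d x \<noteq> 0 \<Longrightarrow> kp_eq (R::'r::comm_ring_1 itself) G [GP (r x), GS x] [GS x]"
  by (intro kp_rel_kp_eq kp_rels_KP2_rng_S)

lemma kp_eq_S_src: "x \<in> P \<Longrightarrow> d x \<noteq> 0 \<Longrightarrow> kp_eq (R::'r::comm_ring_1 itself) G [GS x, GP (s x)] [GS x]"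
  by (intro kp_rel_kp_eq kp_rels_KP2_S_src)

lemma kp_eq_Ss_rng: "x \<in> P \<Longrightarrow> d x \<noteq> 0 \<Longrightarrow> kp_eq (R::'r::comm_ring_1 itself) G [GSs x, GP (r x)] [GSs x]"
  by (intro kp_rel_kp_eq kp_rels_KP2_Ss_rng)

lemma kp_eq_Ss_S: "x \<in> P \<Longrightarrow> d x \<noteq> 0 \<Longrightarrow> kp_eq (R::'r::comm_ring_1 itself) G [GSs x, GS x] [GP (s x)]"
  by (intro kp_rel_kp_eq) (use kp_rels_KP3[of x G x] in simp)

end

section \<open>Normal forms when range equals source and is injective in each degree\<close>

locale Nk_union_k_graph = k_graph G for G :: "('a, 'k) kgraph" +
  assumes rng_eq_src: "\<forall>x\<in>P. r x = s x"
    and inj_rng: "\<forall>n. inj_on r {x \<in> P. d x = n}"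
    and has_no_sources: "no_sources G"
begin

abbreviation "V \<equiv> vertices G"

definition path_at :: "'a \<Rightarrow> ('k \<Rightarrow> nat) \<Rightarrow> 'a" where
  "path_at v n = (THE x. x \<in> P \<and> d x = n \<and> r x = v)"

lemma src_eq_rng: "x \<in> P \<Longrightarrow> s x = r x"
  using rng_eq_src by simp

lemma path_eqI: "x \<in> P \<Longrightarrow> y \<in> P \<Longrightarrow> d x = d y \<Longrightarrow> r x = r y \<Longrightarrow> x = y"
  using inj_rng unfolding inj_on_def by blast

lemma path_at:
  assumes "v \<in> V"
  shows "path_at v n \<in> P" "d (path_at v n) = n" "r (path_at v n) = v" "s (path_at v n) = v"
proof -
  obtain x where x: "x \<in> P" "d x = n" "r x = v"
    using has_no_sources assms unfolding no_sources_def by blast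
  have "\<exists>!x. x \<in> P \<and> d x = n \<and> r x = v"
  proof (rule ex1I[of _ x])
    fix y assume "y \<in> P \<and> d y = n \<and> r y = v"
    then show "y = x" using path_eqI[of y x] x by simp
  qed (use x in simp)
  from theI'[OF this] show "path_at v n \<in> P" "d (path_at v n) = n" "r (path_at v n) = v"
    unfolding path_at_def by auto
  then show "s (path_at v n) = v" using src_eq_rng[of "path_at v n"] by simp
qed

lemma path_at_eqI: "v \<in> V \<Longrightarrow> x \<in> P \<Longrightarrow> d x = n \<Longrightarrow> r x = v \<Longrightarrow> path_at v n = x"
  by (rule path_eqI) (simp_all add: path_at)

lemma path_at_rng_deg: "x \<in> P \<Longrightarrow> path_at (r x) (d x) = x"
  by (intro path_at_eqI rng_in_vertices) simp_all

lemma cmp_path_at: assumes "v \<in> V" shows "c (path_at v a) (path_at v b) = path_at v (a + b)"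
proof -
  note pa = path_at[OF assms, of a] and pb = path_at[OF assms, of b]
  have "s (path_at v a) = r (path_at v b)" using pa pb by simp
  then have "c (path_at v a) (path_at v b) \<in> P" "d (c (path_at v a) (path_at v b)) = a + b"
    "r (c (path_at v a) (path_at v b)) = v"
    using cmp_in[OF pa(1) pb(1)] deg_cmp[OF pa(1) pb(1)] rng_cmp[OF pa(1) pb(1)] pa pb by simp_all
  then show ?thesis by (rule path_at_eqI[OF assms, THEN sym])
qed

lemma paths_at_eq: assumes "v \<in> V" shows "{x \<in> P. d x = n \<and> r x = v} = {path_at v n}"
proof (intro set_eqI iffI)
  fix x assume "x \<in> {x \<in> P. d x = n \<and> r x = v}"
  then show "x \<in> {path_at v n}" using path_at_eqI[OF assms, of x n] by simp
qed (use path_at[OF assms, of n] in simp)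

lemma gens_path_at: "v \<in> V \<Longrightarrow> a \<noteq> 0 \<Longrightarrow> GS (path_at v a) \<in> kp_gens G \<and> GSs (path_at v a) \<in> kp_gens G"
  using path_at unfolding kp_gens_def by auto

lemma gens_path: "x \<in> P \<Longrightarrow> d x \<noteq> 0 \<Longrightarrow> GS x \<in> kp_gens G \<and> GSs x \<in> kp_gens G"
  unfolding kp_gens_def by auto

lemma gens_vertex: "v \<in> V \<Longrightarrow> GP v \<in> kp_gens G"
  unfolding kp_gens_def by auto

lemma kp_eq_vertex:
  assumes "v \<in> V" "n \<noteq> 0"
  shows "kp_eq (R::'r::comm_ring_1 itself) G [GP v] [GS (path_at v n), GSs (path_at v n)]"
proof -
  have "(fa_word [GP v] - (\<Sum>x\<in>{path_at v n}. fa_word [GS x, GSs x]) :: _ \<Rightarrow> 'r) \<in> kp_rels R G"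
    using kp_rels_KP4[OF assms] unfolding paths_at_eq[OF assms(1)] .
  then show ?thesis by (simp add: kp_rel_kp_eq)
qed

text \<open>\<open>nf_word v a b\<close> is \<open>s\<^sub>\<lambda> s\<^sub>\<mu>\<^sup>*\<close> for the paths \<open>\<lambda>\<close>, \<open>\<mu>\<close> at \<open>v\<close> of degrees \<open>a\<close>, \<open>b\<close>; it will
  correspond to the monomial \<open>x\<^bsup>a - b\<^esup>\<close> in the summand of \<open>v\<close>.\<close>

definition nf_word :: "'a \<Rightarrow> ('k \<Rightarrow> nat) \<Rightarrow> ('k \<Rightarrow> nat) \<Rightarrow> 'a kpgen list" where
  "nf_word v a b = [GS (path_at v a), GSs (path_at v b)]"

context
  fixes R :: "'r::comm_ring_1 itself" and v :: 'a and a b :: "'k \<Rightarrow> nat"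
  assumes v: "v \<in> V" and a: "a \<noteq> 0" and b: "b \<noteq> 0"
begin

lemma gens_nf_word: "set (nf_word v a b) \<subseteq> kp_gens G"
  using gens_path_at[OF v a] gens_path_at[OF v b] by (simp add: nf_word_def)

lemma kp_eq_GP_nf_word: "kp_eq R G (GP v # nf_word v a b) (nf_word v a b)"
  unfolding nf_word_def
  by (rule kp_eq_cong[OF kp_eq_rng_S[of "path_at v a"], where p = "[]" and q = "[GSs (path_at v b)]"])
    (use path_at[OF v] gens_path_at[OF v b] a in auto)

lemma kp_zero_GP_nf_word:
  assumes "u \<in> V" "u \<noteq> v"
  shows "kp_zero R G (GP u # nf_word v a b)"
proof -
  have "kp_eq R G (GP u # nf_word v a b) ([GP u, GP v] @ nf_word v a b)"
    by (rule kp_eq_cong[OF kp_eq_sym[OF kp_eq_GP_nf_word], where p = "[GP u]" and q = "[]"])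
      (use gens_vertex[OF assms(1)] in auto)
  moreover have "kp_zero R G ([GP u, GP v] @ nf_word v a b)"
    by (rule kp_zero_cong[OF kp_zero_vertex_vertex[OF assms(1) v assms(2)], where p = "[]"])
      (use gens_nf_word in auto)
  ultimately show ?thesis by (rule kp_zero_kp_eq)
qed

lemma kp_eq_GS_nf_word:
  assumes "x \<in> P" "d x \<noteq> 0" "r x = v"
  shows "kp_eq R G (GS x # nf_word v a b) (nf_word v (d x + a) b)"
proof -
  have "x = path_at v (d x)" using path_at_rng_deg[OF assms(1)] assms(3) by simp
  then have "c x (path_at v a) = path_at v (d x + a)" using cmp_path_at[OF v, of "d x" a] by simp
  then show ?thesis
    unfolding nf_word_def
    by (intro kp_eq_cong[OF kp_eq_S_cmp[of x "path_at v a"], where p = "[]" and q = "[GSs (path_at v b)]"])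
      (use path_at[OF v] gens_path_at[OF v b] a assms src_eq_rng in auto)
qed

lemma kp_zero_GS_nf_word:
  assumes "x \<in> P" "d x \<noteq> 0" "r x \<noteq> v"
  shows "kp_zero R G (GS x # nf_word v a b)"
proof -
  have "kp_eq R G (GS x # nf_word v a b) ([GS x] @ (GP (r x) # nf_word v a b))"
    by (rule kp_eq_cong[OF kp_eq_sym[OF kp_eq_S_src[OF assms(1,2)]], where p = "[]"])
      (use gens_nf_word src_eq_rng[OF assms(1)] in auto)
  moreover have "kp_zero R G ([GS x] @ (GP (r x) # nf_word v a b))"
    by (rule kp_zero_cong[OF kp_zero_GP_nf_word[OF rng_in_vertices[OF assms(1)] assms(3)],
          where p = "[GS x]" and q = "[]"])
      (use gens_path[OF assms(1,2)] in auto)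
  ultimately show ?thesis by (rule kp_zero_kp_eq)
qed

lemma kp_zero_GSs_nf_word:
  assumes "x \<in> P" "d x \<noteq> 0" "r x \<noteq> v"
  shows "kp_zero R G (GSs x # nf_word v a b)"
proof -
  have "kp_eq R G (GSs x # nf_word v a b) ([GSs x] @ (GP (r x) # nf_word v a b))"
    by (rule kp_eq_cong[OF kp_eq_sym[OF kp_eq_Ss_rng[OF assms(1,2)]], where p = "[]"])
      (use gens_nf_word in auto)
  moreover have "kp_zero R G ([GSs x] @ (GP (r x) # nf_word v a b))"
    by (rule kp_zero_cong[OF kp_zero_GP_nf_word[OF rng_in_vertices[OF assms(1)] assms(3)],
          where p = "[GSs x]" and q = "[]"])
      (use gens_path[OF assms(1,2)] in auto)
  ultimately show ?thesis by (rule kp_zero_kp_eq)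
qed

end

lemma kp_eq_GS_commute:
  assumes v: "v \<in> V" and "a \<noteq> 0" "x \<in> P" "d x \<noteq> 0" "r x = v"
  shows "kp_eq (R::'r::comm_ring_1 itself) G [GS (path_at v a), GS x] [GS x, GS (path_at v a)]"
proof -
  have x: "path_at v (d x) = x" "s x = v" using path_at_rng_deg assms(3,5) src_eq_rng by auto
  have "kp_eq R G [GS (path_at v a), GS x] [GS (path_at v (a + d x))]"
    using kp_eq_S_cmp[of "path_at v a" x] cmp_path_at[OF v, of a "d x"] path_at[OF v] assms x
    by auto
  also have "kp_eq R G [GS (path_at v (a + d x))] [GS x, GS (path_at v a)]"
    using kp_eq_sym[OF kp_eq_S_cmp[of x "path_at v a"]] cmp_path_at[OF v, of "d x" a]
      path_at[OF v] assms x
    by (auto simp: add.commute)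
  finally show ?thesis .
qed

text \<open>\<open>s\<^sub>\<lambda>\<^sup>* s\<^sub>\<mu> s\<^sub>\<nu>\<^sup>* = s\<^sub>\<lambda>\<^sup>* s\<^sub>\<mu> p\<^sub>v s\<^sub>\<nu>\<^sup>* = s\<^sub>\<lambda>\<^sup>* s\<^sub>\<mu> s\<^sub>\<lambda> s\<^sub>\<lambda>\<^sup>* s\<^sub>\<nu>\<^sup>* = s\<^sub>\<lambda>\<^sup>* s\<^sub>\<lambda> s\<^sub>\<mu> s\<^sub>\<lambda>\<^sup>* s\<^sub>\<nu>\<^sup>* = s\<^sub>\<mu> s\<^bsub>\<nu>\<lambda>\<^esub>\<^sup>*\<close>: (KP4) for \<open>\<lambda>\<close>,
  then \<open>s\<^sub>\<mu> s\<^sub>\<lambda> = s\<^sub>\<lambda> s\<^sub>\<mu>\<close> (both are the unique path at \<open>v\<close> of degree \<open>d \<lambda> + d \<mu>\<close>), then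
  (KP3) and (KP2).\<close>

lemma kp_eq_GSs_nf_word:
  assumes v: "v \<in> V" and a: "a \<noteq> 0" and b: "b \<noteq> 0" and x: "x \<in> P" "d x \<noteq> 0" "r x = v"
  shows "kp_eq (R::'r::comm_ring_1 itself) G (GSs x # nf_word v a b) (nf_word v a (b + d x))"
proof -
  have xv: "path_at v (d x) = x" "s x = v" using path_at_rng_deg x src_eq_rng by auto
  have gx: "GS x \<in> kp_gens G" "GSs x \<in> kp_gens G" using gens_path[OF x(1,2)] by auto
  have ga: "GS (path_at v a) \<in> kp_gens G" using gens_path_at[OF v a] by auto
  have gb: "GSs (path_at v b) \<in> kp_gens G" using gens_path_at[OF v b] by auto
  have "kp_eq R G [GSs x, GS (path_at v a), GSs (path_at v b)]
      [GSs x, GS (path_at v a), GP v, GSs (path_at v b)]"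
    by (rule kp_eq_cong[OF kp_eq_sym[OF kp_eq_S_src[of "path_at v a"]], where p = "[GSs x]"])
      (use path_at[OF v] a gx gb in auto)
  also have "kp_eq R G \<dots> [GSs x, GS (path_at v a), GS x, GSs x, GSs (path_at v b)]"
    by (rule kp_eq_cong[OF kp_eq_vertex[OF v x(2)], where p = "[GSs x, GS (path_at v a)]"])
      (use xv gx ga gb in auto)
  also have "kp_eq R G \<dots> [GSs x, GS x, GS (path_at v a), GSs x, GSs (path_at v b)]"
    by (rule kp_eq_cong[OF kp_eq_GS_commute[OF v a x], where p = "[GSs x]"]) (use gx gb in auto)
  also have "kp_eq R G \<dots> [GP v, GS (path_at v a), GSs x, GSs (path_at v b)]"
    by (rule kp_eq_cong[OF kp_eq_Ss_S[OF x(1,2)], where p = "[]"]) (use xv gx ga gb in auto)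
  also have "kp_eq R G \<dots> [GS (path_at v a), GSs x, GSs (path_at v b)]"
    by (rule kp_eq_cong[OF kp_eq_rng_S[of "path_at v a"], where p = "[]"])
      (use path_at[OF v] a gx gb in auto)
  also have "kp_eq R G \<dots> [GS (path_at v a), GSs (path_at v (b + d x))]"
    by (rule kp_eq_cong[OF kp_eq_Ss_cmp[of "path_at v b" x], where p = "[GS (path_at v a)]"])
      (use path_at[OF v] b x xv cmp_path_at[OF v, of b "d x"] ga in auto)
  finally show ?thesis by (simp add: nf_word_def)
qed

lemma kp_eq_nf_word_cancel:
  assumes v: "v \<in> V" and a: "a \<noteq> 0" and b: "b \<noteq> 0" and k: "k \<noteq> 0"
  shows "kp_eq (R::'r::comm_ring_1 itself) G (nf_word v (a + k) (b + k)) (nf_word v a b)"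
proof -
  note path_at[OF v]
  have ga: "GS (path_at v a) \<in> kp_gens G" and gb: "GSs (path_at v b) \<in> kp_gens G"
    and gk: "GS (path_at v k) \<in> kp_gens G"
    and gbk: "GSs (path_at v (b + k)) \<in> kp_gens G"
    using gens_path_at v a b k by (auto simp: add_eq_0_iff_fun)
  have "kp_eq R G [GS (path_at v (a + k)), GSs (path_at v (b + k))]
      [GS (path_at v a), GS (path_at v k), GSs (path_at v (b + k))]"
    by (rule kp_eq_cong[OF kp_eq_sym[OF kp_eq_S_cmp[of "path_at v a" "path_at v k"]], where p = "[]"])
      (use path_at[OF v] a k cmp_path_at[OF v, of a k] gbk in auto)
  also have "kp_eq R G \<dots> [GS (path_at v a), GS (path_at v k), GSs (path_at v k), GSs (path_at v b)]"
    by (rule kp_eq_cong[OF kp_eq_sym[OF kp_eq_Ss_cmp[of "path_at v b" "path_at v k"]],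
          where p = "[GS (path_at v a), GS (path_at v k)]"])
      (use path_at[OF v] b k cmp_path_at[OF v, of b k] ga gk in auto)
  also have "kp_eq R G \<dots> [GS (path_at v a), GP v, GSs (path_at v b)]"
    by (rule kp_eq_cong[OF kp_eq_sym[OF kp_eq_vertex[OF v k]], where p = "[GS (path_at v a)]"])
      (use ga gb in auto)
  also have "kp_eq R G \<dots> [GS (path_at v a), GSs (path_at v b)]"
    by (rule kp_eq_cong[OF kp_eq_S_src[of "path_at v a"], where p = "[]"])
      (use path_at[OF v] a gb in auto)
  finally show ?thesis by (simp add: nf_word_def)
qed

lemma kp_eq_nf_word:
  assumes "v \<in> V" "a \<noteq> 0" "b \<noteq> 0" "a' \<noteq> 0" "b' \<noteq> 0" and "a + b' = a' + b"
  shows "kp_eq (R::'r::comm_ring_1 itself) G (nf_word v a b) (nf_word v a' b')"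
proof -
  have "kp_eq R G (nf_word v a b) (nf_word v (a + b') (b + b'))"
    using kp_eq_sym[OF kp_eq_nf_word_cancel[OF assms(1,2,3,5)]] .
  also have "nf_word v (a + b') (b + b') = nf_word v (a' + b) (b' + b)"
    using assms(6) by (simp add: add.commute)
  also have "kp_eq R G \<dots> (nf_word v a' b')"
    using kp_eq_nf_word_cancel[OF assms(1,4,5,3)] .
  finally show ?thesis .
qed

end

text \<open>\<open>Some (v, m)\<close> stands for the monomial \<open>x\<^sup>m\<close> in the summand of \<open>v\<close>, and \<open>None\<close> for \<open>0\<close>.\<close>

fun mon_mult :: "('a \<times> ('k \<Rightarrow> int)) option \<Rightarrow> ('a \<times> ('k \<Rightarrow> int)) option \<Rightarrow> ('a \<times> ('k \<Rightarrow> int)) option" where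
  "mon_mult (Some (v, a)) (Some (w, b)) = (if v = w then Some (v, a + b) else None)"
| "mon_mult _ _ = None"

lemma mon_mult_assoc: "mon_mult (mon_mult x y) z = mon_mult x (mon_mult y z)"
  by (cases x; cases y; cases z) (auto simp: add.assoc)

definition int_deg :: "('k \<Rightarrow> nat) \<Rightarrow> 'k \<Rightarrow> int" where
  "int_deg a = (\<lambda>i. int (a i))"

text \<open>\<open>x\<^sup>m\<close> is represented by \<open>s\<^sub>\<lambda> s\<^sub>\<mu>\<^sup>*\<close> with \<open>d \<lambda> = pos_deg m\<close> and \<open>d \<mu> = neg_deg m\<close>; the summand
  \<open>1\<close> keeps both degrees nonzero, since \<open>s\<^sub>\<lambda>\<close> is a generator only for \<open>d \<lambda> \<noteq> 0\<close>.\<close>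

definition pos_deg :: "('k \<Rightarrow> int) \<Rightarrow> 'k \<Rightarrow> nat" where
  "pos_deg m = (\<lambda>i. nat (m i) + 1)"

definition neg_deg :: "('k \<Rightarrow> int) \<Rightarrow> 'k \<Rightarrow> nat" where
  "neg_deg m = (\<lambda>i. nat (- m i) + 1)"

lemma pos_deg_neq_0: "pos_deg m \<noteq> 0" and neg_deg_neq_0: "neg_deg m \<noteq> 0"
  and const_1_neq_0: "(\<lambda>_. 1) \<noteq> (0 :: 'k \<Rightarrow> nat)"
  by (auto simp: pos_deg_def neg_deg_def fun_eq_iff)

lemma int_deg_pos_neg: "int_deg (pos_deg m) - int_deg (neg_deg m) = m"
  by (auto simp: int_deg_def pos_deg_def neg_deg_def fun_eq_iff)

lemma pos_deg_0: "pos_deg 0 = (\<lambda>_. 1)" and neg_deg_0: "neg_deg 0 = (\<lambda>_. 1)"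
  by (auto simp: pos_deg_def neg_deg_def fun_eq_iff)

lemma int_deg_add: "int_deg (a + b) = int_deg a + int_deg b"
  by (simp add: int_deg_def fun_eq_iff)

context Nk_union_k_graph
begin

fun gen_monomial :: "'a kpgen \<Rightarrow> ('a \<times> ('k \<Rightarrow> int)) option" where
  "gen_monomial (GP v) = Some (v, 0)"
| "gen_monomial (GS x) = Some (r x, int_deg (d x))"
| "gen_monomial (GSs x) = Some (r x, - int_deg (d x))"

fun word_monomial :: "'a kpgen list \<Rightarrow> ('a \<times> ('k \<Rightarrow> int)) option" where
  "word_monomial [] = None"
| "word_monomial [g] = gen_monomial g"
| "word_monomial (g # h # w) = mon_mult (gen_monomial g) (word_monomial (h # w))"

lemma word_monomial_Cons: "w \<noteq> [] \<Longrightarrow> word_monomial (g # w) = mon_mult (gen_monomial g) (word_monomial w)"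
  by (cases w) auto

lemma word_monomial_append:
  "u \<noteq> [] \<Longrightarrow> w \<noteq> [] \<Longrightarrow> word_monomial (u @ w) = mon_mult (word_monomial u) (word_monomial w)"
proof (induction u)
  case Nil then show ?case by simp
next
  case (Cons g u)
  then show ?case by (cases "u = []") (simp_all add: word_monomial_Cons mon_mult_assoc)
qed

definition laurent_word :: "'a \<Rightarrow> ('k \<Rightarrow> int) \<Rightarrow> 'a kpgen list" where
  "laurent_word v m = nf_word v (pos_deg m) (neg_deg m)"

lemma word_monomial_laurent_word: "v \<in> V \<Longrightarrow> word_monomial (laurent_word v m) = Some (v, m)"
  unfolding laurent_word_def nf_word_def using path_at[of v] int_deg_pos_neg[of m] by simp

lemma gens_laurent_word: "v \<in> V \<Longrightarrow> laurent_word v m \<noteq> [] \<and> set (laurent_word v m) \<subseteq> kp_gens G"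
  unfolding laurent_word_def nf_word_def using gens_path_at[OF _ pos_deg_neq_0] gens_path_at[OF _ neg_deg_neq_0]
  by auto

lemma laurent_word_inj:
  assumes "v \<in> V" "v' \<in> V" "laurent_word v m = laurent_word v' m'"
  shows "v = v' \<and> m = m'"
proof -
  have eq: "path_at v (pos_deg m) = path_at v' (pos_deg m')" "path_at v (neg_deg m) = path_at v' (neg_deg m')"
    using assms(3) unfolding laurent_word_def nf_word_def by auto
  then have "v = v'" "pos_deg m = pos_deg m'" "neg_deg m = neg_deg m'"
    using path_at[OF assms(1)] path_at[OF assms(2)] by metis+
  then show ?thesis using int_deg_pos_neg[of m] int_deg_pos_neg[of m'] by metis
qed

lemma kp_eq_nf_word_laurent_word:
  assumes "v \<in> V" "a \<noteq> 0" "b \<noteq> 0"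
  shows "kp_eq (R::'r::comm_ring_1 itself) G (nf_word v a b) (laurent_word v (int_deg a - int_deg b))"
  unfolding laurent_word_def
  by (rule kp_eq_nf_word[OF assms pos_deg_neq_0 neg_deg_neq_0])
    (auto simp: int_deg_def pos_deg_def neg_deg_def fun_eq_iff)

definition has_normal_form :: "'r::comm_ring_1 itself \<Rightarrow> 'a kpgen list \<Rightarrow> ('a \<times> ('k \<Rightarrow> int)) option \<Rightarrow> bool" where
  "has_normal_form R w p \<longleftrightarrow> (case p of None \<Rightarrow> kp_zero R G w
     | Some (v, m) \<Rightarrow> v \<in> V \<and> kp_eq R G w (laurent_word v m))"

lemma has_normal_form_kp_eq:
  "kp_eq R G w w' \<Longrightarrow> has_normal_form R w' p \<Longrightarrow> has_normal_form R w p"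
  unfolding has_normal_form_def
  by (auto split: option.splits intro: kp_eq_trans kp_zero_kp_eq)

context
  fixes R :: "'r::comm_ring_1 itself" and v :: 'a and a b :: "'k \<Rightarrow> nat"
  assumes v: "v \<in> V" and a: "a \<noteq> 0" and b: "b \<noteq> 0"
begin

lemma has_normal_form_GP_nf_word:
  assumes "u \<in> V"
  shows "has_normal_form R (GP u # nf_word v a b)
           (mon_mult (gen_monomial (GP u)) (Some (v, int_deg a - int_deg b)))"
proof (cases "u = v")
  case True
  then show ?thesis
    using kp_eq_trans[OF kp_eq_GP_nf_word[OF v a b] kp_eq_nf_word_laurent_word[OF v a b]] v
    by (simp add: has_normal_form_def)
qed (simp add: has_normal_form_def kp_zero_GP_nf_word[OF v a b assms])

lemma has_normal_form_GS_nf_word: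
  assumes "x \<in> P" "d x \<noteq> 0"
  shows "has_normal_form R (GS x # nf_word v a b)
           (mon_mult (gen_monomial (GS x)) (Some (v, int_deg a - int_deg b)))"
proof (cases "r x = v")
  case True
  have "kp_eq R G (GS x # nf_word v a b) (laurent_word v (int_deg (d x + a) - int_deg b))"
    using kp_eq_trans[OF kp_eq_GS_nf_word[OF v a b assms True]
        kp_eq_nf_word_laurent_word[OF v _ b]] a by (simp add: add_eq_0_iff_fun)
  then show ?thesis using True v by (simp add: has_normal_form_def int_deg_add algebra_simps)
qed (simp add: has_normal_form_def kp_zero_GS_nf_word[OF v a b assms])

lemma has_normal_form_GSs_nf_word:
  assumes "x \<in> P" "d x \<noteq> 0"
  shows "has_normal_form R (GSs x # nf_word v a b)
           (mon_mult (gen_monomial (GSs x)) (Some (v, int_deg a - int_deg b)))"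
proof (cases "r x = v")
  case True
  have "kp_eq R G (GSs x # nf_word v a b) (laurent_word v (int_deg a - int_deg (b + d x)))"
    using kp_eq_trans[OF kp_eq_GSs_nf_word[OF v a b assms True]
        kp_eq_nf_word_laurent_word[OF v a]] b by (simp add: add_eq_0_iff_fun)
  then show ?thesis using True v by (simp add: has_normal_form_def int_deg_add algebra_simps)
qed (simp add: has_normal_form_def kp_zero_GSs_nf_word[OF v a b assms])

lemma has_normal_form_gen_nf_word:
  assumes "g \<in> kp_gens G"
  shows "has_normal_form R (g # nf_word v a b)
           (mon_mult (gen_monomial g) (Some (v, int_deg a - int_deg b)))"
  using assms unfolding kp_gens_def
  by (auto intro: has_normal_form_GP_nf_word has_normal_form_GS_nf_word has_normal_form_GSs_nf_word)

end

lemma has_normal_form_Cons: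
  assumes "g \<in> kp_gens G" "has_normal_form R w p"
  shows "has_normal_form R (g # w) (mon_mult (gen_monomial g) p)"
proof (cases p)
  case None
  then show ?thesis
    using kp_zero_cong[of R G w "[g]" "[]"] assms by (simp add: has_normal_form_def)
next
  case (Some q)
  then obtain v m where q: "p = Some (v, m)" "v \<in> V" "kp_eq R G w (laurent_word v m)"
    using assms(2) unfolding has_normal_form_def by (cases q) auto
  have "kp_eq R G (g # w) (g # nf_word v (pos_deg m) (neg_deg m))"
    using kp_eq_cong[OF q(3), of "[g]" "[]"] assms(1) by (simp add: laurent_word_def)
  moreover have "has_normal_form R (g # nf_word v (pos_deg m) (neg_deg m)) (mon_mult (gen_monomial g) p)"
    using has_normal_form_gen_nf_word[OF q(2) pos_deg_neq_0[of m] neg_deg_neq_0[of m] assms(1)] q(1)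
    by (simp add: int_deg_pos_neg)
  ultimately show ?thesis by (rule has_normal_form_kp_eq)
qed

lemma has_normal_form_single:
  assumes "g \<in> kp_gens G"
  shows "has_normal_form (R::'r::comm_ring_1 itself) [g] (gen_monomial g)"
proof -
  have vertex: "has_normal_form R [GP u] (Some (u, 0))" if "u \<in> V" for u
    using kp_eq_vertex[OF that const_1_neq_0] that
    by (simp add: has_normal_form_def laurent_word_def nf_word_def pos_deg_0 neg_deg_0)
  consider (GP) u where "g = GP u" "u \<in> V" | (GS) x where "g = GS x" "x \<in> P" "d x \<noteq> 0"
    | (GSs) x where "g = GSs x" "x \<in> P" "d x \<noteq> 0"
    using assms unfolding kp_gens_def by auto
  then show ?thesis
  proof cases
    case GP then show ?thesis using vertex by simp
  next
    case GS
    have "kp_eq R G [g] [g, GP (r x)]"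
      using kp_eq_sym[OF kp_eq_S_src[OF GS(2,3)]] src_eq_rng[OF GS(2)] GS(1) by simp
    then show ?thesis
      using has_normal_form_Cons[OF assms vertex[OF rng_in_vertices[OF GS(2)]]] GS(1)
      by (auto intro: has_normal_form_kp_eq)
  next
    case GSs
    have "kp_eq R G [g] [g, GP (r x)]"
      using kp_eq_sym[OF kp_eq_Ss_rng[OF GSs(2,3)]] GSs(1) by simp
    then show ?thesis
      using has_normal_form_Cons[OF assms vertex[OF rng_in_vertices[OF GSs(2)]]] GSs(1)
      by (auto intro: has_normal_form_kp_eq)
  qed
qed

theorem kp_normal_form:
  assumes "set w \<subseteq> kp_gens G" "w \<noteq> []"
  shows "has_normal_form (R::'r::comm_ring_1 itself) w (word_monomial w)"
  using assms
proof (induction w)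
  case (Cons g w)
  then show ?case
    by (cases "w = []") (simp_all add: has_normal_form_single has_normal_form_Cons word_monomial_Cons)
qed simp

lemma word_monomial_in_vertices:
  assumes "set w \<subseteq> kp_gens G" "w \<noteq> []" "word_monomial w = Some (v, m)"
  shows "v \<in> V"
  using kp_normal_form[OF assms(1,2), where R = "TYPE(int)"] assms(3)
  by (simp add: has_normal_form_def)

end

section \<open>The direct sum of Laurent polynomial rings\<close>

lemma lsum_mult_eq_sum:
  assumes "finite S" "{m1. F v m1 \<noteq> 0} \<subseteq> S"
  shows "lsum_mult F H v m = (\<Sum>m1\<in>S. F v m1 * H v (m - m1))"
  unfolding lsum_mult_def by (rule sum.mono_neutral_left) (use assms in auto)

lemma lsum_mult_0: "lsum_mult F 0 = 0" "lsum_mult 0 F = 0"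
  unfolding lsum_mult_def by (auto simp: fun_eq_iff)

lemma finite_support_lsum_carrier: "F \<in> lsum_carrier R G \<Longrightarrow> finite {m. F v m \<noteq> 0}"
proof -
  assume "F \<in> lsum_carrier R G"
  then have "finite {(v, m). F v m \<noteq> 0}" unfolding lsum_carrier_def by simp
  then have "finite (Pair v -` {(v, m). F v m \<noteq> 0})" by (rule finite_vimageI) (simp add: inj_on_def)
  then show ?thesis by (simp add: vimage_def)
qed

lemma lsum_mult_commute:
  assumes "finite {m. F v m \<noteq> 0}" "finite {m. H v m \<noteq> 0}"
  shows "lsum_mult F H v m = lsum_mult H F v (m :: 'k \<Rightarrow> int)"
proof -
  have "lsum_mult F H v m = (\<Sum>m1\<in>{m1. F v m1 \<noteq> 0 \<and> H v (m - m1) \<noteq> 0}. F v m1 * H v (m - m1))"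
    unfolding lsum_mult_def by (rule sum.mono_neutral_right) (use assms in auto)
  also have "\<dots> = (\<Sum>m2\<in>{m2. H v m2 \<noteq> 0 \<and> F v (m - m2) \<noteq> 0}. H v m2 * F v (m - m2))"
    by (rule sum.reindex_bij_witness[where i = "\<lambda>x. m - x" and j = "\<lambda>x. m - x"])
      (auto simp: mult.commute)
  also have "\<dots> = lsum_mult H F v m"
    unfolding lsum_mult_def by (rule sum.mono_neutral_left) (use assms in auto)
  finally show ?thesis .
qed

theorem kp_laurent_iso_imp_kp_commutative:
  assumes "kp_laurent_iso (R::'r::comm_ring_1 itself) G"
  shows "kp_commutative R G"
proof -
  obtain \<phi> where im: "\<phi> ` fa_carrier R G = lsum_carrier R G"
    and add: "\<forall>f\<in>fa_carrier R G. \<forall>g\<in>fa_carrier R G. \<phi> (f + g) = \<phi> f + \<phi> g"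
    and smult: "\<forall>c. \<forall>f\<in>fa_carrier R G. \<phi> (\<lambda>w. c * f w) = (\<lambda>v m. c * \<phi> f v m)"
    and mult: "\<forall>f\<in>fa_carrier R G. \<forall>g\<in>fa_carrier R G. \<phi> (fa_mult f g) = lsum_mult (\<phi> f) (\<phi> g)"
    and ker: "\<forall>f\<in>fa_carrier R G. \<phi> f = 0 \<longleftrightarrow> f \<in> kp_ideal R G"
    using assms unfolding kp_laurent_iso_def by blast
  show ?thesis unfolding kp_commutative_def
  proof (intro ballI)
    fix f g assume f: "f \<in> fa_carrier R G" and g: "g \<in> fa_carrier R G"
    have fg: "fa_mult f g \<in> fa_carrier R G" and gf: "fa_mult g f \<in> fa_carrier R G"
      using fa_carrier_mult f g by auto
    have "\<phi> (fa_mult f g - fa_mult g f) = \<phi> (fa_mult f g + (\<lambda>w. (- 1) * fa_mult g f w))"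
      by (rule arg_cong[where f = \<phi>]) (simp add: fun_eq_iff)
    also have "\<dots> = \<phi> (fa_mult f g) + \<phi> (\<lambda>w. (- 1) * fa_mult g f w)"
      using add fg fa_carrier_smult[OF gf] by blast
    also have "\<dots> = lsum_mult (\<phi> f) (\<phi> g) + (\<lambda>v m. (- 1) * lsum_mult (\<phi> g) (\<phi> f) v m)"
      by (simp only: smult[rule_format, OF gf] mult[rule_format, OF f g] mult[rule_format, OF g f])
    also have "\<dots> = 0"
    proof (intro ext)
      fix v m
      have "\<phi> f \<in> lsum_carrier R G" "\<phi> g \<in> lsum_carrier R G" using im f g by auto
      then have "lsum_mult (\<phi> f) (\<phi> g) v m = lsum_mult (\<phi> g) (\<phi> f) v m"
        by (intro lsum_mult_commute finite_support_lsum_carrier)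
      then show "(lsum_mult (\<phi> f) (\<phi> g) + (\<lambda>v m. (- 1) * lsum_mult (\<phi> g) (\<phi> f) v m)) v m = 0 v m"
        by simp
    qed
    finally show "fa_mult f g - fa_mult g f \<in> kp_ideal R G"
      using ker fa_carrier_diff[OF fg gf] by blast
  qed
qed

lemma mon_mult_indicator_sum:
  assumes "finite M" "\<And>p. x = Some p \<Longrightarrow> snd p \<in> M"
  shows "(\<Sum>m1\<in>M. (if x = Some (v, m1) then 1 else 0) * (if y = Some (v, m - m1) then 1 else 0))
         = (if mon_mult x y = Some (v, m) then (1::'r::comm_ring_1) else 0)"
proof (cases x)
  case (Some p)
  obtain v' a where p: "p = (v', a)" by (cases p)
  show ?thesis
  proof (cases "v' = v")
    case True
    have "(\<Sum>m1\<in>M. (if x = Some (v, m1) then 1 else 0) * (if y = Some (v, m - m1) then 1 else 0))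
        = (\<Sum>m1\<in>M. if a = m1 then (if y = Some (v, m - m1) then 1 else 0) else (0::'r))"
      by (rule sum.cong) (use Some p True in auto)
    also have "\<dots> = (if y = Some (v, m - a) then 1 else 0)"
      using assms Some p by simp
    also have "\<dots> = (if mon_mult x y = Some (v, m) then 1 else 0)"
      using Some p True by (cases y) (auto simp: algebra_simps split: if_splits)
    finally show ?thesis .
  next
    case False
    then have "mon_mult x y \<noteq> Some (v, m)" using Some p by (cases y) (auto split: if_splits)
    then show ?thesis using Some p False by simp
  qed
qed simp

context Nk_union_k_graph
begin

definition monomial_indicator :: "'a kpgen list \<Rightarrow> 'a \<times> ('k \<Rightarrow> int) \<Rightarrow> 'r::comm_ring_1" where
  "monomial_indicator w p = (if word_monomial w = Some p then 1 else 0)"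

definition laurent_map :: "('a kpgen list \<Rightarrow> 'r::comm_ring_1) \<Rightarrow> 'a \<Rightarrow> ('k \<Rightarrow> int) \<Rightarrow> 'r" where
  "laurent_map f = (\<lambda>v m. lin_ext monomial_indicator f (v, m))"

lemma laurent_map_add:
  "finite {w. f w \<noteq> 0} \<Longrightarrow> finite {w. g w \<noteq> 0} \<Longrightarrow> laurent_map (f + g) = laurent_map f + laurent_map g"
  unfolding laurent_map_def by (simp add: fun_eq_iff lin_ext_add)

lemma laurent_map_smult:
  "finite {w. f w \<noteq> 0} \<Longrightarrow> laurent_map (\<lambda>w. a * f w) = (\<lambda>v m. a * laurent_map f v m)"
  unfolding laurent_map_def by (simp add: fun_eq_iff lin_ext_smult)

lemma laurent_map_eq_sum:
  "laurent_map f v m = (\<Sum>u\<in>{w. f w \<noteq> 0}. f u * (if word_monomial u = Some (v, m) then 1 else 0))"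
  unfolding laurent_map_def lin_ext_def monomial_indicator_def ..

lemma laurent_map_nonzeroD:
  assumes "laurent_map f v m \<noteq> 0"
  shows "\<exists>u. f u \<noteq> 0 \<and> word_monomial u = Some (v, m)"
proof (rule ccontr)
  assume "\<not> ?thesis"
  then have "\<forall>u\<in>{w. f w \<noteq> 0}. f u * (if word_monomial u = Some (v, m) then 1 else 0) = 0" by auto
  then show False using assms unfolding laurent_map_eq_sum by simp
qed

lemma laurent_map_fa_word_diff:
  "word_monomial u = word_monomial u' \<Longrightarrow> laurent_map (fa_word u - fa_word u' :: _ \<Rightarrow> 'r::comm_ring_1) = 0"
  unfolding laurent_map_def by (simp add: fun_eq_iff lin_ext_fa_word_diff monomial_indicator_def)

lemma laurent_map_fa_word_None:
  "word_monomial u = None \<Longrightarrow> laurent_map (fa_word u :: _ \<Rightarrow> 'r::comm_ring_1) = 0"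
  unfolding laurent_map_def by (simp add: fun_eq_iff lin_ext_fa_word monomial_indicator_def)

lemma laurent_map_fa_mult:
  assumes f: "f \<in> fa_carrier R G" and g: "g \<in> fa_carrier R G"
  shows "laurent_map (fa_mult f g) = lsum_mult (laurent_map f) (laurent_map g)"
proof (intro ext)
  fix v m
  let ?A = "{w. f w \<noteq> 0}" and ?B = "{w. g w \<noteq> 0}"
  let ?ind = "\<lambda>u v m. if word_monomial u = Some (v, m) then 1 else 0"
  define M where "M = (\<lambda>u. snd (the (word_monomial u))) ` ?A"
  have A: "finite ?A" "\<And>u. u \<in> ?A \<Longrightarrow> u \<noteq> []" and B: "finite ?B" "\<And>w. w \<in> ?B \<Longrightarrow> w \<noteq> []"
    using f g unfolding in_fa_carrier_iff by auto
  have M: "finite M" "\<And>u p. u \<in> ?A \<Longrightarrow> word_monomial u = Some p \<Longrightarrow> snd p \<in> M"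
    using A(1) unfolding M_def by force+
  have "laurent_map (fa_mult f g) v m =
      (\<Sum>u\<in>?A. \<Sum>w\<in>?B. f u * g w * monomial_indicator (u @ w) (v, m))"
    unfolding laurent_map_def by (rule lin_ext_fa_mult[OF A(1) _ B(1)]) auto
  also have "\<dots> = (\<Sum>u\<in>?A. \<Sum>w\<in>?B. f u * g w * (\<Sum>m1\<in>M. ?ind u v m1 * ?ind w v (m - m1)))"
    unfolding monomial_indicator_def
    by (intro sum.cong refl) (simp add: mon_mult_indicator_sum[OF M] word_monomial_append A B)
  also have "\<dots> = (\<Sum>m1\<in>M. \<Sum>u\<in>?A. \<Sum>w\<in>?B. (f u * ?ind u v m1) * (g w * ?ind w v (m - m1)))"
    by (simp add: sum_distrib_left sum.swap[of _ M] algebra_simps)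
  also have "\<dots> = (\<Sum>m1\<in>M. laurent_map f v m1 * laurent_map g v (m - m1))"
    unfolding laurent_map_eq_sum by (simp add: sum_product)
  also have "\<dots> = lsum_mult (laurent_map f) (laurent_map g) v m"
    using M laurent_map_nonzeroD[of f v] by (intro lsum_mult_eq_sum[symmetric]) force+
  finally show "laurent_map (fa_mult f g) v m = lsum_mult (laurent_map f) (laurent_map g) v m" .
qed

lemma laurent_map_in_lsum_carrier:
  assumes f: "f \<in> fa_carrier (R::'r::comm_ring_1 itself) G"
  shows "laurent_map f \<in> lsum_carrier R G"
proof -
  have "{(v, m). laurent_map f v m \<noteq> 0} \<subseteq> the ` word_monomial ` {w. f w \<noteq> 0}"
    by (force dest: laurent_map_nonzeroD)
  then have "finite {(v, m). laurent_map f v m \<noteq> 0}"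
    by (rule finite_subset) (use f in \<open>simp add: in_fa_carrier_iff\<close>)
  moreover have "v \<in> V" if "laurent_map f v m \<noteq> 0" for v m
    using laurent_map_nonzeroD[OF that] word_monomial_in_vertices f
    unfolding in_fa_carrier_iff by blast
  ultimately show ?thesis unfolding lsum_carrier_def by blast
qed

lemma laurent_map_surj:
  assumes F: "F \<in> lsum_carrier (R::'r::comm_ring_1 itself) G"
  shows "\<exists>f\<in>fa_carrier R G. laurent_map f = F"
proof -
  define T where "T = {(v, m). F v m \<noteq> 0}"
  have T: "finite T" "\<And>p. p \<in> T \<Longrightarrow> fst p \<in> V" using F unfolding lsum_carrier_def T_def by auto
  define h where "h p = (\<lambda>w. F (fst p) (snd p) * fa_word (laurent_word (fst p) (snd p)) w)" for p
  have h: "h p \<in> fa_carrier R G" if "p \<in> T" for p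
    unfolding h_def using gens_laurent_word[OF T(2)[OF that]]
    by (intro fa_carrier_smult fa_carrier_fa_word) auto
  have "laurent_map (\<Sum>p\<in>T. h p) v m = F v m" for v m
  proof -
    have "laurent_map (\<Sum>p\<in>T. h p) v m = (\<Sum>p\<in>T. lin_ext monomial_indicator (h p) (v, m))"
      unfolding laurent_map_def using T(1) h by (simp add: lin_ext_sum in_fa_carrier_iff)
    also have "\<dots> = (\<Sum>p\<in>T. if p = (v, m) then F v m else 0)"
      using word_monomial_laurent_word T(2)
      by (intro sum.cong refl)
        (auto simp: h_def lin_ext_smult finite_support_fa_word lin_ext_fa_word monomial_indicator_def)
    also have "\<dots> = F v m" using T(1) by (simp add: T_def)
    finally show ?thesis .
  qed
  moreover have "(\<Sum>p\<in>T. h p) \<in> fa_carrier R G" using h by (intro fa_carrier_sum) blast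
  ultimately show ?thesis by blast
qed

lemma laurent_map_kp_rels:
  assumes "f \<in> kp_rels (R::'r::comm_ring_1 itself) G"
  shows "laurent_map f = 0"
  using assms
proof (cases rule: kp_rels_cases)
  case (KP1 v w)
  then show ?thesis by (cases "v = w") (simp_all add: laurent_map_fa_word_diff laurent_map_fa_word_None)
next
  case (KP2_Ss x y)
  show ?thesis unfolding KP2_Ss(6)
    by (rule laurent_map_fa_word_diff)
      (use KP2_Ss in \<open>simp add: rng_cmp deg_cmp src_eq_rng int_deg_add algebra_simps\<close>)
next
  case (KP3 x y)
  then have "x \<noteq> y \<Longrightarrow> r x \<noteq> r y" using path_eqI by blast
  with KP3 show ?thesis
    by (cases "x = y") (simp_all add: laurent_map_fa_word_diff laurent_map_fa_word_None src_eq_rng)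
next
  case (KP4 v n)
  then have "f = fa_word [GP v] - fa_word [GS (path_at v n), GSs (path_at v n)]"
    by (simp add: paths_at_eq)
  then show ?thesis by (simp add: laurent_map_fa_word_diff path_at[OF KP4(1)])
qed (simp_all add: laurent_map_fa_word_diff rng_cmp deg_cmp src_eq_rng int_deg_add)

lemma laurent_map_kp_ideal:
  assumes "f \<in> kp_ideal (R::'r::comm_ring_1 itself) G"
  shows "laurent_map f = 0"
  using assms
proof induction
  case (rel f) then show ?case by (rule laurent_map_kp_rels)
next
  case zero then show ?case by (simp add: laurent_map_def lin_ext_def fun_eq_iff)
next
  case (add f g)
  have "laurent_map (f + g) = laurent_map f + laurent_map g"
    by (rule laurent_map_add) (use add in \<open>simp_all add: finite_support_kp_ideal\<close>)
  then show ?case unfolding add.IH add_0_right .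
next
  case (smult f a) then show ?case by (simp add: laurent_map_smult finite_support_kp_ideal fun_eq_iff)
next
  case (lmult f h)
  have "laurent_map (fa_mult h f) = lsum_mult (laurent_map h) (laurent_map f)"
    by (rule laurent_map_fa_mult[OF lmult(2) kp_ideal_in_fa_carrier[OF lmult(1)]])
  then show ?case unfolding lmult.IH lsum_mult_0 .
next
  case (rmult f h)
  have "laurent_map (fa_mult f h) = lsum_mult (laurent_map f) (laurent_map h)"
    by (rule laurent_map_fa_mult[OF kp_ideal_in_fa_carrier[OF rmult(1)] rmult(2)])
  then show ?case unfolding rmult.IH lsum_mult_0 .
qed

definition fa_normal_form :: "'a kpgen list \<Rightarrow> 'a kpgen list \<Rightarrow> 'r::comm_ring_1" where
  "fa_normal_form u = (case word_monomial u of None \<Rightarrow> 0 | Some (v, m) \<Rightarrow> fa_word (laurent_word v m))"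

lemma fa_word_minus_normal_form:
  assumes "set u \<subseteq> kp_gens G" "u \<noteq> []"
  shows "(fa_word u - fa_normal_form u :: _ \<Rightarrow> 'r::comm_ring_1) \<in> kp_ideal (R::'r itself) G"
  using kp_normal_form[OF assms, where R = R] unfolding fa_normal_form_def has_normal_form_def kp_eq_def kp_zero_def
  by (auto split: option.splits)

text \<open>At \<open>t = laurent_word v m\<close> the sum is \<open>laurent_map f v m\<close>, since \<open>laurent_word\<close> is injective;
  at any other word it vanishes.\<close>

lemma sum_fa_normal_form:
  assumes f: "f \<in> fa_carrier (R::'r::comm_ring_1 itself) G" and "laurent_map f = 0"
  shows "(\<Sum>u\<in>{w. f w \<noteq> 0}. f u * fa_normal_form u t) = 0"
proof -
  let ?A = "{w. f w \<noteq> 0}"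
  have nf: "fa_normal_form u t =
      (if \<exists>v m. v \<in> V \<and> t = laurent_word v m \<and> word_monomial u = Some (v, m) then 1 else 0 :: 'r)"
    if "u \<in> ?A" for u
  proof (cases "word_monomial u")
    case (Some p)
    obtain v' m' where p: "p = (v', m')" by (cases p)
    have "v' \<in> V" using word_monomial_in_vertices f that Some p unfolding in_fa_carrier_iff by blast
    then show ?thesis using Some p by (auto simp: fa_normal_form_def fa_word_def)
  qed (simp add: fa_normal_form_def)
  show ?thesis
  proof (cases "\<exists>v m. v \<in> V \<and> t = laurent_word v m")
    case True
    then obtain v m where vm: "v \<in> V" "t = laurent_word v m" by blast
    have iff: "(\<exists>v' m'. v' \<in> V \<and> t = laurent_word v' m' \<and> word_monomial u = Some (v', m')) \<longleftrightarrow>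
        word_monomial u = Some (v, m)" for u
    proof
      assume "\<exists>v' m'. v' \<in> V \<and> t = laurent_word v' m' \<and> word_monomial u = Some (v', m')"
      then obtain v' m' where "v' \<in> V" "t = laurent_word v' m'" "word_monomial u = Some (v', m')"
        by blast
      then show "word_monomial u = Some (v, m)" using laurent_word_inj[OF vm(1) \<open>v' \<in> V\<close>] vm(2) by auto
    qed (use vm in blast)
    have "f u * fa_normal_form u t = f u * (if word_monomial u = Some (v, m) then 1 else 0)"
      if "u \<in> ?A" for u
      unfolding nf[OF that] iff ..
    then have "(\<Sum>u\<in>?A. f u * fa_normal_form u t) = laurent_map f v m"
      unfolding laurent_map_eq_sum by (rule sum.cong[OF refl])
    then show ?thesis using assms(2) by simp
  next
    case False
    have "f u * fa_normal_form u t = 0" if "u \<in> ?A" for u using nf[OF that] False by auto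
    then show ?thesis by (intro sum.neutral) blast
  qed
qed

lemma laurent_map_kernel:
  assumes f: "f \<in> fa_carrier (R::'r::comm_ring_1 itself) G" and "laurent_map f = 0"
  shows "f \<in> kp_ideal R G"
proof -
  let ?A = "{w. f w \<noteq> 0}"
  have "(\<Sum>u\<in>?A. (\<lambda>w. f u * (fa_word u - fa_normal_form u) w)) \<in> kp_ideal R G"
    using f fa_word_minus_normal_form kp_ideal.smult unfolding in_fa_carrier_iff
    by (intro kp_ideal_sum) blast
  moreover have "(\<Sum>u\<in>?A. (\<lambda>w. f u * (fa_word u - fa_normal_form u) w)) = f"
  proof
    fix t
    have "(\<Sum>u\<in>?A. f u * fa_word u t) = f t"
      using f by (simp add: in_fa_carrier_iff fa_word_def if_distrib cong: if_cong)
    then show "(\<Sum>u\<in>?A. (\<lambda>w. f u * (fa_word u - fa_normal_form u) w)) t = f t"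
      using sum_fa_normal_form[OF assms, of t]
      by (simp add: sum_fun_apply right_diff_distrib sum_subtractf)
  qed
  ultimately show ?thesis by simp
qed

theorem kp_laurent_iso: "kp_laurent_iso (R::'r::comm_ring_1 itself) G"
  unfolding kp_laurent_iso_def
proof (intro exI[of _ laurent_map] conjI ballI allI)
  show "laurent_map ` fa_carrier R G = lsum_carrier R G"
    using laurent_map_in_lsum_carrier laurent_map_surj by blast
  fix f assume f: "f \<in> fa_carrier R G"
  then show "laurent_map f = 0 \<longleftrightarrow> f \<in> kp_ideal R G"
    using laurent_map_kernel laurent_map_kp_ideal by blast
  fix c show "laurent_map (\<lambda>w. c * f w) = (\<lambda>v m. c * laurent_map f v m)"
    using f by (simp add: laurent_map_smult in_fa_carrier_iff)
next
  fix f g assume "f \<in> fa_carrier R G" "g \<in> fa_carrier R G"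
  then show "laurent_map (f + g) = laurent_map f + laurent_map g"
    and "laurent_map (fa_mult f g) = lsum_mult (laurent_map f) (laurent_map g)"
    by (simp_all add: laurent_map_add laurent_map_fa_mult in_fa_carrier_iff)
qed

end

context k_graph
begin

lemma kg_iso_disj_union_Nk_imp:
  assumes "kg_iso G (disj_union_Nk (vertices G))"
  shows "(\<forall>x\<in>P. r x = s x) \<and> (\<forall>n. inj_on r {x \<in> P. d x = n})"
proof -
  let ?H = "disj_union_Nk (vertices G)"
  obtain \<phi> where bij: "bij_betw \<phi> P (paths ?H)"
    and hom: "\<forall>x\<in>P. deg ?H (\<phi> x) = d x \<and> rng ?H (\<phi> x) = \<phi> (r x) \<and> src ?H (\<phi> x) = \<phi> (s x)"
    using assms unfolding kg_iso_def by blast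
  have inj: "inj_on \<phi> P" using bij bij_betw_def by blast
  have \<phi>: "snd (\<phi> x) = d x" "\<phi> (r x) = (fst (\<phi> x), 0)" "\<phi> (s x) = (fst (\<phi> x), 0)" if "x \<in> P" for x
    using hom that by (auto simp: disj_union_Nk_def split_beta)
  have "r x = s x" if "x \<in> P" for x
    using inj_onD[OF inj _ rng_in[OF that] src_in[OF that]] \<phi>[OF that] by simp
  moreover have "inj_on r {x \<in> P. d x = n}" for n
  proof (rule inj_onI)
    fix x y assume "x \<in> {x \<in> P. d x = n}" "y \<in> {x \<in> P. d x = n}" "r x = r y"
    moreover have "\<phi> x = (fst (\<phi> (r x)), d x)" if "x \<in> P" for x
      using \<phi>[OF that] by (simp add: prod_eq_iff)
    ultimately show "x = y" using inj_onD[OF inj] by fastforce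
  qed
  ultimately show ?thesis by blast
qed

lemma kg_iso_disj_union_NkI:
  assumes rs: "\<forall>x\<in>P. r x = s x" and inj: "\<forall>n. inj_on r {x \<in> P. d x = n}" and "no_sources G"
  shows "kg_iso G (disj_union_Nk (vertices G))"
  unfolding kg_iso_def
proof (intro exI[of _ "\<lambda>x. (r x, d x)"] conjI ballI impI)
  show "bij_betw (\<lambda>x. (r x, d x)) P (paths (disj_union_Nk (vertices G)))"
    unfolding bij_betw_def
  proof
    show "inj_on (\<lambda>x. (r x, d x)) P" using inj unfolding inj_on_def by auto
    show "(\<lambda>x. (r x, d x)) ` P = paths (disj_union_Nk (vertices G))"
    proof (intro set_eqI iffI)
      fix p :: "'a \<times> ('k \<Rightarrow> nat)" assume "p \<in> paths (disj_union_Nk (vertices G))"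
      then obtain v n where "p = (v, n)" "v \<in> vertices G" unfolding disj_union_Nk_def by auto
      moreover obtain x where "x \<in> P" "d x = n" "r x = v"
        using \<open>no_sources G\<close> \<open>v \<in> vertices G\<close> unfolding no_sources_def by blast
      ultimately show "p \<in> (\<lambda>x. (r x, d x)) ` P" by auto
    qed (use rng_in_vertices in \<open>auto simp: disj_union_Nk_def\<close>)
  qed
next
  fix x assume "x \<in> P"
  then show "deg (disj_union_Nk (vertices G)) (r x, d x) = d x"
    and "rng (disj_union_Nk (vertices G)) (r x, d x) = (r (r x), d (r x))"
    and "src (disj_union_Nk (vertices G)) (r x, d x) = (r (s x), d (s x))"
    using rs rng_rng deg_rng rng_src deg_src by (simp_all add: disj_union_Nk_def)
next
  fix x y assume "x \<in> P" "y \<in> P" "s x = r y"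
  then show "(r (c x y), d (c x y)) = cmp (disj_union_Nk (vertices G)) (r x, d x) (r y, d y)"
    using rng_cmp deg_cmp by (simp add: disj_union_Nk_def)
qed

end

theorem proposition5p3:
  fixes G :: "('a, 'k::finite) kgraph"
  assumes "is_kgraph G" and "row_finite G" and "no_sources G"
    and "(1::'r::comm_ring_1) \<noteq> 0"
  shows "(kp_commutative TYPE('r) G \<longleftrightarrow>
            ((\<forall>x\<in>paths G. rng G x = src G x) \<and>
             (\<forall>n. inj_on (rng G) {x \<in> paths G. deg G x = n}))) \<and>
         (((\<forall>x\<in>paths G. rng G x = src G x) \<and>
             (\<forall>n. inj_on (rng G) {x \<in> paths G. deg G x = n})) \<longleftrightarrow>
            kg_iso G (disj_union_Nk (vertices G))) \<and>
         (kg_iso G (disj_union_Nk (vertices G)) \<longleftrightarrow> kp_laurent_iso TYPE('r) G)"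
proof -
  interpret k_graph G by (rule k_graph.intro[OF assms(1)])
  let ?cond = "(\<forall>x\<in>paths G. rng G x = src G x) \<and> (\<forall>n. inj_on (rng G) {x \<in> paths G. deg G x = n})"
  have comm_cond: "kp_commutative TYPE('r) G \<Longrightarrow> ?cond"
    using kp_commutative_rng_eq_src[OF _ assms(2-4)] kp_commutative_inj_rng[OF _ assms(2-4)] by simp
  have cond_laurent: "kp_laurent_iso TYPE('r) G" if ?cond
  proof -
    interpret Nk_union_k_graph G by unfold_locales (use assms(1,3) that in auto)
    show ?thesis by (rule kp_laurent_iso)
  qed
  show ?thesis
    using comm_cond cond_laurent kp_laurent_iso_imp_kp_commutative
      kg_iso_disj_union_Nk_imp kg_iso_disj_union_NkI[OF _ _ assms(3)] by blast
qed

end
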